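(* Let $\Omega\subset\mathbb{R}^N$ ($N=2,3$) be a bounded convex polytope or smooth domain, $s\in(\frac12,1]$, and let $y\in H^s(I;L^2(\Omega))\cap L^2(I;H^{2s}(\Omega))$ be the solution of the state equation $\partial_ty-\Delta y=f$, $y=u$ on $\Sigma_T$, $y(0)=y_0$ (for some data $f\in L^2(I;L^2(\Omega))$, $u\in L^2(I;L^2(\Gamma))$, $y_0\in L^2(\Omega)$). Define the piecewise constant function $g$ by $$g|_{I_m}=\frac{P_k^my-y(t_m)}{k_m}-\frac{P_k^{m-1}y-y(t_{m-1})}{k_m},\quad m=1,\dots,M,\qquad P_k^0y:=y(t_0)=y_0.$$ Then $$\sum_{m=1}^Mk_m^{1-(2s-1)}\|g\|^2_{L^2(I_m;L^2(\Omega))}\le C\|y\|^2_{H^s(I;L^2(\Omega))},$$ with $C$ independent of $k$ and $y$.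
   Context: $\Gamma=\partial\Omega$, $T>0$, $I=(0,T)$, $\Sigma_T=I\times\Gamma$. Time mesh: $0=t_0<\dots<t_M=T$, $I_m=(t_{m-1},t_m]$, $k_m=t_m-t_{m-1}$, $k=\max_mk_m$, with $k/k_m\le C$ for all $m$ and $k_m\le k_{m-1}$ for $m\ge 2$. $P_k^my=\frac1{k_m}\int_{t_{m-1}}^{t_m}y(t)\,dt$ for $m=1,\dots,M$. (Since $s>\frac12$, $y\in C(\bar I;L^2(\Omega))$, so $y(t_m)$ is defined.) *)

theory Defs
  imports "HOL-Analysis.Analysis"
begin

definition L2sq :: "'a::euclidean_space set \<Rightarrow> ('a \<Rightarrow> real) \<Rightarrow> ennreal" where
  "L2sq \<Omega> v = (\<integral>\<^sup>+ x. ennreal ((v x)^2) * indicator \<Omega> x \<partial>lebesgue)"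

definition L2L2sq :: "real set \<Rightarrow> 'a::euclidean_space set \<Rightarrow> (real \<Rightarrow> 'a \<Rightarrow> real) \<Rightarrow> ennreal" where
  "L2L2sq J \<Omega> w = (\<integral>\<^sup>+ t. L2sq \<Omega> (w t) * indicator J t \<partial>lborel)"

definition gagliardo_sq :: "real \<Rightarrow> real set \<Rightarrow> 'a::euclidean_space set \<Rightarrow> (real \<Rightarrow> 'a \<Rightarrow> real) \<Rightarrow> ennreal" where
  "gagliardo_sq s J \<Omega> y =
     (\<integral>\<^sup>+ t. \<integral>\<^sup>+ \<tau>. ennreal (1 / \<bar>t - \<tau>\<bar> powr (1 + 2 * s)) * L2sq \<Omega> (\<lambda>x. y t x - y \<tau> x)
            * indicator J \<tau> * indicator J t \<partial>lborel \<partial>lborel)"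

definition weak_time_deriv :: "real \<Rightarrow> real \<Rightarrow> 'a::euclidean_space set \<Rightarrow> (real \<Rightarrow> 'a \<Rightarrow> real) \<Rightarrow> (real \<Rightarrow> 'a \<Rightarrow> real) \<Rightarrow> bool" where
  "weak_time_deriv a b \<Omega> y w \<longleftrightarrow>
     (\<lambda>(t, x). w t x) \<in> borel_measurable (lborel \<Otimes>\<^sub>M lborel) \<and>
     (\<forall>t\<in>{a..b}. AE x in lebesgue. x \<in> \<Omega> \<longrightarrow> y t x = y a x + (LINT \<tau>:{a..t}|lborel. w \<tau> x))"

text \<open>Squared norm of H^s(I; L2(Omega)), I = (0,T), 0 < s <= 1 (value \<infinity> if y is not in the space).\<close>
definition Hs_sq :: "real \<Rightarrow> real \<Rightarrow> 'a::euclidean_space set \<Rightarrow> (real \<Rightarrow> 'a \<Rightarrow> real) \<Rightarrow> ennreal" where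
  "Hs_sq s T \<Omega> y =
     (if s < 1 then L2L2sq {0<..<T} \<Omega> y + gagliardo_sq s {0<..<T} \<Omega> y
      else L2L2sq {0<..<T} \<Omega> y + (INF w \<in> {w. weak_time_deriv 0 T \<Omega> y w}. L2L2sq {0<..<T} \<Omega> w))"

definition mstep :: "(nat \<Rightarrow> real) \<Rightarrow> nat \<Rightarrow> real" where
  "mstep t m = t m - t (m - 1)"

definition time_mesh :: "real \<Rightarrow> nat \<Rightarrow> (nat \<Rightarrow> real) \<Rightarrow> real \<Rightarrow> bool" where
  "time_mesh T M t \<kappa> \<longleftrightarrow>
     t 0 = 0 \<and> t M = T \<and> (\<forall>m\<in>{1..M}. t (m - 1) < t m) \<and>
     (\<forall>m\<in>{1..M}. Max (mstep t ` {1..M}) / mstep t m \<le> \<kappa>) \<and>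
     (\<forall>m\<in>{2..M}. mstep t m \<le> mstep t (m - 1))"

definition Pk :: "(nat \<Rightarrow> real) \<Rightarrow> (real \<Rightarrow> 'a \<Rightarrow> real) \<Rightarrow> nat \<Rightarrow> 'a \<Rightarrow> real" where
  "Pk t y m x = (if m = 0 then y (t 0) x
                 else (1 / mstep t m) * (LINT \<tau>:{t (m - 1)..t m}|lborel. y \<tau> x))"

definition gk :: "(nat \<Rightarrow> real) \<Rightarrow> (real \<Rightarrow> 'a \<Rightarrow> real) \<Rightarrow> nat \<Rightarrow> 'a \<Rightarrow> real" where
  "gk t y m x = (Pk t y m x - y (t m) x) / mstep t m
               - (Pk t y (m - 1) x - y (t (m - 1)) x) / mstep t m"

end

(* On I_m the function g equals (E_m - E_(m-1)) / k_m, where E_m = P_k^m y - y(t_m) and E_0 = 0,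
   so everything reduces to the endpoint estimate ||E_m||^2 <= C k_m^(2s-1) |y|^2_(H^s(I_m)).
   For s < 1 one compares the averages of y over the dyadic intervals [t_m - 2^-j k_m, t_m]:
   consecutive averages differ in L2 by at most 2^(-j(2s-1)/2) k_m^((2s-1)/2) times the local
   Gagliardo seminorm, a geometric series because s > 1/2, and by continuity of y the averages
   tend to y(t_m). For s = 1, y(t_m) - y(tau) is an integral of the weak derivative and
   Cauchy-Schwarz applies. Summing over m, the local seminorms add up to at most the global one,
   and the error E_(m-1) is charged to interval m-1 using k_m <= k_(m-1) <= kappa k_m. *)

theory Submission
  imports Defs
begin

section \<open>Averages of real functions over intervals\<close>

lemma abs_set_integral_le_nn_integral:
  fixes f :: "real \<Rightarrow> real"
  assumes [measurable]: "f \<in> borel_measurable lborel" "S \<in> sets lborel"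
  shows "ennreal \<bar>LINT \<tau>:S|lborel. f \<tau>\<bar> \<le> (\<integral>\<^sup>+\<tau>. ennreal \<bar>f \<tau>\<bar> * indicator S \<tau> \<partial>lborel)"
proof (cases "set_integrable lborel S f")
  case True
  then have "norm (LINT \<tau>:S|lborel. f \<tau>) \<le> (\<integral>\<^sup>+\<tau>. norm (indicator S \<tau> *\<^sub>R f \<tau>) \<partial>lborel)"
    unfolding set_lebesgue_integral_def set_integrable_def by (rule integral_norm_bound_ennreal)
  also have "\<dots> = (\<integral>\<^sup>+\<tau>. ennreal \<bar>f \<tau>\<bar> * indicator S \<tau> \<partial>lborel)"
    by (intro nn_integral_cong) (auto simp: indicator_def)
  finally show ?thesis by simp
next
  case False
  then have "(LINT \<tau>:S|lborel. f \<tau>) = 0"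
    unfolding set_lebesgue_integral_def set_integrable_def by (rule not_integrable_integral_eq)
  then show ?thesis by simp
qed

lemma nn_integral_abs_Icc_squared_le:
  fixes g :: "real \<Rightarrow> real"
  assumes [measurable]: "g \<in> borel_measurable lborel" and "c \<le> d"
  shows "(\<integral>\<^sup>+\<tau>. ennreal \<bar>g \<tau>\<bar> * indicator {c..d} \<tau> \<partial>lborel)^2
     \<le> ennreal (d - c) * (\<integral>\<^sup>+\<tau>. ennreal ((g \<tau>)^2) * indicator {c..d} \<tau> \<partial>lborel)"
proof -
  have "(\<integral>\<^sup>+\<tau>. (ennreal \<bar>g \<tau>\<bar> * indicator {c..d} \<tau>) * indicator {c..d} \<tau> \<partial>lborel)^2
     \<le> (\<integral>\<^sup>+\<tau>. (ennreal \<bar>g \<tau>\<bar> * indicator {c..d} \<tau>)^2 \<partial>lborel) * (\<integral>\<^sup>+\<tau>. (indicator {c..d} \<tau>)^2 \<partial>lborel)"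
    by (rule Cauchy_Schwarz_nn_integral) auto
  moreover have "(\<integral>\<^sup>+\<tau>. (ennreal \<bar>g \<tau>\<bar> * indicator {c..d} \<tau>) * indicator {c..d} \<tau> \<partial>lborel)
     = (\<integral>\<^sup>+\<tau>. ennreal \<bar>g \<tau>\<bar> * indicator {c..d} \<tau> \<partial>lborel)"
    by (intro nn_integral_cong) (auto simp: indicator_def)
  moreover have "(\<integral>\<^sup>+\<tau>. (ennreal \<bar>g \<tau>\<bar> * indicator {c..d} \<tau>)^2 \<partial>lborel)
     = (\<integral>\<^sup>+\<tau>. ennreal ((g \<tau>)^2) * indicator {c..d} \<tau> \<partial>lborel)"
    by (intro nn_integral_cong) (auto simp: indicator_def ennreal_power)
  moreover have "(\<integral>\<^sup>+\<tau>. (indicator {c..d} \<tau>)^2 \<partial>lborel) = ennreal (d - c)"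
    using \<open>c \<le> d\<close> by (subst nn_integral_cong[where v = "indicator {c..d}"]) (auto simp: indicator_def)
  ultimately show ?thesis by (simp add: mult.commute)
qed

lemma set_integrable_const_Icc: "set_integrable lborel {c..d::real} (\<lambda>_. r::real)"
  by (metis (no_types, lifting) ext borel_integrable_atLeastAtMost'
    continuous_on_const set_integrable_def)

definition interval_avg :: "real \<Rightarrow> real \<Rightarrow> (real \<Rightarrow> real) \<Rightarrow> real" where
  "interval_avg c d f = 1 / (d - c) * (LINT \<tau>:{c..d}|lborel. f \<tau>)"

lemma interval_avg_minus_const:
  fixes f :: "real \<Rightarrow> real"
  assumes "c < d" and "set_integrable lborel {c..d} f"
  shows "interval_avg c d f - r = 1 / (d - c) * (LINT \<tau>:{c..d}|lborel. f \<tau> - r)"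
proof -
  have "(LINT \<tau>:{c..d}|lborel. f \<tau> - r) = (LINT \<tau>:{c..d}|lborel. f \<tau>) - (LINT \<tau>:{c..d}|lborel. r)"
    using assms(2) set_integrable_const_Icc by simp
  also have "(LINT \<tau>:{c..d}|lborel. r) = (d - c) * r"
    using \<open>c < d\<close> by (subst set_integral_const) auto
  finally show ?thesis
    unfolding interval_avg_def using \<open>c < d\<close> by (simp add: field_simps)
qed

lemma sq_interval_avg_minus_le:
  fixes f :: "real \<Rightarrow> real"
  assumes [measurable]: "f \<in> borel_measurable lborel" and cd: "c < d"
    and fi: "set_integrable lborel {c..d} f"
  shows "ennreal ((interval_avg c d f - r)^2)
     \<le> ennreal (1 / (d - c)) * (\<integral>\<^sup>+\<tau>. ennreal ((f \<tau> - r)^2) * indicator {c..d} \<tau> \<partial>lborel)"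
proof -
  define J where "J = (LINT \<tau>:{c..d}|lborel. f \<tau> - r)"
  define I where "I = (\<integral>\<^sup>+\<tau>. ennreal ((f \<tau> - r)^2) * indicator {c..d} \<tau> \<partial>lborel)"
  have "ennreal \<bar>J\<bar> \<le> (\<integral>\<^sup>+\<tau>. ennreal \<bar>f \<tau> - r\<bar> * indicator {c..d} \<tau> \<partial>lborel)"
    unfolding J_def by (rule abs_set_integral_le_nn_integral) auto
  then have "(ennreal \<bar>J\<bar>)^2 \<le> (\<integral>\<^sup>+\<tau>. ennreal \<bar>f \<tau> - r\<bar> * indicator {c..d} \<tau> \<partial>lborel)^2"
    by (rule power_mono) simp
  also have "\<dots> \<le> ennreal (d - c) * I"
    unfolding I_def using cd by (intro nn_integral_abs_Icc_squared_le) auto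
  finally have J2: "ennreal (J^2) \<le> ennreal (d - c) * I"
    by (simp add: ennreal_power)
  have "ennreal ((interval_avg c d f - r)^2) = ennreal ((1 / (d - c))^2) * ennreal (J^2)"
    unfolding interval_avg_minus_const[OF cd fi] J_def
    by (subst power_mult_distrib, rule ennreal_mult) auto
  also have "\<dots> \<le> ennreal ((1 / (d - c))^2) * (ennreal (d - c) * I)"
    by (rule mult_left_mono[OF J2]) simp
  also have "\<dots> = ennreal ((1 / (d - c))^2 * (d - c)) * I"
    using cd by (simp add: ennreal_mult mult.assoc)
  also have "(1 / (d - c))^2 * (d - c) = 1 / (d - c)"
    using cd by (simp add: power2_eq_square)
  finally show ?thesis unfolding I_def .
qed

text \<open>Both averages are compared with the average A over the larger interval: first by
  Jensen on [c', d], then pointwise, writing A - f t as an average of f \<tau> - f t.\<close>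
lemma sq_interval_avg_diff_le:
  fixes f :: "real \<Rightarrow> real"
  assumes [measurable]: "f \<in> borel_measurable lborel" and cc: "c \<le> c'" and cd: "c' < d"
    and fi: "set_integrable lborel {c..d} f"
  shows "ennreal ((interval_avg c' d f - interval_avg c d f)^2)
     \<le> ennreal (1 / (d - c')) * ennreal (1 / (d - c)) *
       (\<integral>\<^sup>+t. (\<integral>\<^sup>+\<tau>. ennreal ((f t - f \<tau>)^2) * indicator {c..d} \<tau> \<partial>lborel) * indicator {c'..d} t \<partial>lborel)"
proof -
  define A where "A = interval_avg c d f"
  have fi': "set_integrable lborel {c'..d} f"
    by (rule set_integrable_subset[OF fi]) (use cc in auto)
  have "ennreal ((interval_avg c' d f - A)^2)
     \<le> ennreal (1 / (d - c')) * (\<integral>\<^sup>+t. ennreal ((f t - A)^2) * indicator {c'..d} t \<partial>lborel)"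
    using cd fi' by (intro sq_interval_avg_minus_le) auto
  also have "(\<integral>\<^sup>+t. ennreal ((f t - A)^2) * indicator {c'..d} t \<partial>lborel)
     \<le> (\<integral>\<^sup>+t. (ennreal (1 / (d - c)) * (\<integral>\<^sup>+\<tau>. ennreal ((f t - f \<tau>)^2) * indicator {c..d} \<tau> \<partial>lborel)) * indicator {c'..d} t \<partial>lborel)"
  proof (intro nn_integral_mono mult_right_mono)
    fix t
    have "ennreal ((f t - A)^2) = ennreal ((A - f t)^2)" by (simp add: power2_commute)
    also have "\<dots> \<le> ennreal (1 / (d - c)) * (\<integral>\<^sup>+\<tau>. ennreal ((f \<tau> - f t)^2) * indicator {c..d} \<tau> \<partial>lborel)"
      unfolding A_def using cc cd fi by (intro sq_interval_avg_minus_le) auto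
    finally show "ennreal ((f t - A)^2) \<le> ennreal (1 / (d - c)) * (\<integral>\<^sup>+\<tau>. ennreal ((f t - f \<tau>)^2) * indicator {c..d} \<tau> \<partial>lborel)"
      by (simp add: power2_commute)
  qed simp
  also have "\<dots> = ennreal (1 / (d - c)) * (\<integral>\<^sup>+t. (\<integral>\<^sup>+\<tau>. ennreal ((f t - f \<tau>)^2) * indicator {c..d} \<tau> \<partial>lborel) * indicator {c'..d} t \<partial>lborel)"
    by (subst nn_integral_cmult[symmetric]) (auto simp: mult.assoc)
  finally show ?thesis unfolding A_def by (simp add: mult.assoc mult_left_mono)
qed

text \<open>On the diagonal the kernel is 1 / 0 = 0, hence the hypothesis on v.\<close>
lemma sq_le_diam_powr_times_kernel:
  fixes t \<tau> c d p v :: real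
  assumes "t \<in> {c..d}" "\<tau> \<in> {c..d}" "0 < p" "t = \<tau> \<Longrightarrow> v = 0"
  shows "ennreal (v^2) \<le> ennreal ((d - c) powr p) * (ennreal (1 / \<bar>t - \<tau>\<bar> powr p) * ennreal (v^2))"
proof (cases "t = \<tau>")
  case False
  then have pos: "0 < \<bar>t - \<tau>\<bar>" by simp
  have "\<bar>t - \<tau>\<bar> powr p \<le> (d - c) powr p" using pos assms by (intro powr_mono2) auto
  then have "1 \<le> (d - c) powr p * (1 / \<bar>t - \<tau>\<bar> powr p)" using pos by (simp add: field_simps)
  then have "1 * v^2 \<le> ((d - c) powr p * (1 / \<bar>t - \<tau>\<bar> powr p)) * v^2"
    by (rule mult_right_mono) simp
  then have "ennreal (v^2) \<le> ennreal ((d - c) powr p * ((1 / \<bar>t - \<tau>\<bar> powr p) * v^2))"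
    by (intro ennreal_leI) (simp add: mult.assoc)
  also have "\<dots> = ennreal ((d - c) powr p) * (ennreal (1 / \<bar>t - \<tau>\<bar> powr p) * ennreal (v^2))"
    by (intro trans[OF ennreal_mult] arg_cong2[where f = "(*)"] refl ennreal_mult) auto
  finally show ?thesis .
qed (use assms in simp)

definition gagliardo_Icc :: "real \<Rightarrow> real \<Rightarrow> real \<Rightarrow> (real \<Rightarrow> real) \<Rightarrow> ennreal" where
  "gagliardo_Icc p c d f =
     (\<integral>\<^sup>+t. \<integral>\<^sup>+\<tau>. ennreal (1 / \<bar>t - \<tau>\<bar> powr p) * ennreal ((f t - f \<tau>)^2)
        * indicator {c..d} \<tau> * indicator {c..d} t \<partial>lborel \<partial>lborel)"

lemma gagliardo_Icc_mono: "a \<le> c \<Longrightarrow> gagliardo_Icc p c d f \<le> gagliardo_Icc p a d f"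
  unfolding gagliardo_Icc_def by (intro nn_integral_mono) (auto simp: indicator_def)

lemma nn_integral_nn_integral_multc:
  fixes F :: "real \<Rightarrow> real \<Rightarrow> ennreal"
  assumes Fm: "(\<lambda>(t, \<tau>). F t \<tau>) \<in> borel_measurable (lborel \<Otimes>\<^sub>M lborel)"
  shows "(\<integral>\<^sup>+t. \<integral>\<^sup>+\<tau>. F t \<tau> \<partial>lborel \<partial>lborel) * c = (\<integral>\<^sup>+t. \<integral>\<^sup>+\<tau>. F t \<tau> * c \<partial>lborel \<partial>lborel)"
proof -
  have m1: "F t \<in> borel_measurable lborel" for t using measurable_Pair2[OF Fm, of t] by simp
  have m2: "(\<lambda>t. \<integral>\<^sup>+\<tau>. F t \<tau> \<partial>lborel) \<in> borel_measurable lborel"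
    by (rule lborel.borel_measurable_nn_integral) (simp add: Fm)
  show ?thesis
    by (subst nn_integral_multc[OF m2, symmetric]) (intro nn_integral_cong nn_integral_multc[symmetric] m1)
qed

lemma sq_interval_avg_diff_le_gagliardo:
  fixes f :: "real \<Rightarrow> real"
  assumes [measurable]: "f \<in> borel_measurable lborel" and cc: "c \<le> c'" and cd: "c' < d"
    and fi: "set_integrable lborel {c..d} f" and p: "0 < p"
  shows "ennreal ((interval_avg c' d f - interval_avg c d f)^2)
     \<le> ennreal (1 / (d - c')) * ennreal (1 / (d - c)) * ennreal ((d - c) powr p) * gagliardo_Icc p c d f"
proof -
  define K where "K t \<tau> = ennreal (1 / \<bar>t - \<tau>\<bar> powr p) * ennreal ((f t - f \<tau>)^2)
    * indicator {c..d} \<tau> * (indicator {c..d} t :: ennreal)" for t \<tau>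
  have "(\<integral>\<^sup>+t. (\<integral>\<^sup>+\<tau>. ennreal ((f t - f \<tau>)^2) * indicator {c..d} \<tau> \<partial>lborel) * indicator {c'..d} t \<partial>lborel)
     \<le> (\<integral>\<^sup>+t. (\<integral>\<^sup>+\<tau>. ennreal ((f t - f \<tau>)^2) * indicator {c..d} \<tau> \<partial>lborel) * indicator {c..d} t \<partial>lborel)"
    using cc by (intro nn_integral_mono mult_left_mono) (auto simp: indicator_def)
  also have "\<dots> = (\<integral>\<^sup>+t. \<integral>\<^sup>+\<tau>. ennreal ((f t - f \<tau>)^2) * indicator {c..d} \<tau> * indicator {c..d} t \<partial>lborel \<partial>lborel)"
    by (intro nn_integral_cong, subst nn_integral_multc) auto
  also have "\<dots> \<le> (\<integral>\<^sup>+t. \<integral>\<^sup>+\<tau>. K t \<tau> * ennreal ((d - c) powr p) \<partial>lborel \<partial>lborel)"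
  proof (intro nn_integral_mono)
    fix t \<tau>
    show "ennreal ((f t - f \<tau>)^2) * indicator {c..d} \<tau> * indicator {c..d} t \<le> K t \<tau> * ennreal ((d - c) powr p)"
    proof (cases "t \<in> {c..d} \<and> \<tau> \<in> {c..d}")
      case True
      then have "ennreal ((f t - f \<tau>)^2)
          \<le> ennreal ((d - c) powr p) * (ennreal (1 / \<bar>t - \<tau>\<bar> powr p) * ennreal ((f t - f \<tau>)^2))"
        using p by (intro sq_le_diam_powr_times_kernel) auto
      then show ?thesis using True by (simp add: K_def mult.commute)
    qed (auto simp: K_def)
  qed
  also have "\<dots> = gagliardo_Icc p c d f * ennreal ((d - c) powr p)"
    unfolding gagliardo_Icc_def K_def by (rule nn_integral_nn_integral_multc[symmetric]) measurable
  finally have "(\<integral>\<^sup>+t. (\<integral>\<^sup>+\<tau>. ennreal ((f t - f \<tau>)^2) * indicator {c..d} \<tau> \<partial>lborel) * indicator {c'..d} t \<partial>lborel)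
     \<le> ennreal ((d - c) powr p) * gagliardo_Icc p c d f"
    by (simp add: mult.commute)
  then show ?thesis
    using order.trans[OF sq_interval_avg_diff_le[OF assms(1) cc cd fi] mult_left_mono]
    by (simp add: mult.assoc)
qed

lemma sq_halved_interval_avg_diff_le_gagliardo:
  fixes f :: "real \<Rightarrow> real"
  assumes [measurable]: "f \<in> borel_measurable lborel" and cb: "c < b" and s: "0 < s"
    and fi: "set_integrable lborel {c..b} f"
  shows "ennreal ((interval_avg ((c + b) / 2) b f - interval_avg c b f)^2)
     \<le> ennreal (2 * (b - c) powr (2 * s - 1)) * gagliardo_Icc (1 + 2 * s) c b f"
proof -
  define h where "h = b - c"
  have h: "0 < h" using cb by (simp add: h_def)
  have mid: "b - (c + b) / 2 = h / 2" by (simp add: h_def field_simps)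
  have "h powr (1 + 2 * s) = h powr 2 * h powr (2 * s - 1)" by (subst powr_add[symmetric]) simp
  also have "h powr 2 = h^2" using h by (simp add: powr_numeral)
  finally have "1 / (h / 2) * (1 / h) * h powr (1 + 2 * s) = 2 * h powr (2 * s - 1)"
    using h by (simp add: power2_eq_square field_simps)
  then have "ennreal (1 / (b - (c + b) / 2)) * ennreal (1 / (b - c)) * ennreal ((b - c) powr (1 + 2 * s))
      = ennreal (2 * (b - c) powr (2 * s - 1))"
    unfolding mid h_def[symmetric] using h by (simp add: ennreal_mult[symmetric])
  moreover have "ennreal ((interval_avg ((c + b) / 2) b f - interval_avg c b f)^2)
      \<le> ennreal (1 / (b - (c + b) / 2)) * ennreal (1 / (b - c)) * ennreal ((b - c) powr (1 + 2 * s))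
        * gagliardo_Icc (1 + 2 * s) c b f"
    using cb s fi by (intro sq_interval_avg_diff_le_gagliardo) auto
  ultimately show ?thesis by simp
qed

lemma geometric_sum_le: "0 \<le> q \<Longrightarrow> q < 1 \<Longrightarrow> (\<Sum>j<n. q^j) \<le> 1 / (1 - q)" for q :: real
  by (subst sum_gp_strict) (auto simp: divide_simps)

lemma sum_geometric_weights_le:
  fixes q K :: real and G :: ennreal
  assumes q: "0 < q" "q < 1" and "0 \<le> K"
  shows "(\<Sum>j<n. ennreal (1 / q^j) * (ennreal (K * q^j * q^j) * G)) \<le> ennreal (K / (1 - q)) * G"
proof -
  have "ennreal (1 / q^j) * (ennreal (K * q^j * q^j) * G) = ennreal (K * q^j) * G" for j
    using q \<open>0 \<le> K\<close> by (simp add: ennreal_mult[symmetric] mult.assoc[symmetric])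
  then have "(\<Sum>j<n. ennreal (1 / q^j) * (ennreal (K * q^j * q^j) * G)) = ennreal (K * (\<Sum>j<n. q^j)) * G"
    using q \<open>0 \<le> K\<close> by (simp add: sum_distrib_left sum_distrib_right[symmetric])
  also have "\<dots> \<le> ennreal (K / (1 - q)) * G"
    using q \<open>0 \<le> K\<close> by (intro mult_right_mono ennreal_leI)
      (auto simp: divide_inverse intro!: mult_left_mono order_trans[OF geometric_sum_le])
  finally show ?thesis .
qed

lemma sq_diff_le: "(u - v)^2 \<le> 2 * u^2 + 2 * v^2" for u v :: real
proof -
  have "0 \<le> (u + v)^2" by simp
  then show ?thesis by (simp add: power2_eq_square algebra_simps)
qed

text \<open>Cauchy-Schwarz with the weights q^j on the telescoping sum a n - a 0.\<close>
lemma sq_telescope_le: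
  fixes a :: "nat \<Rightarrow> real" and q z :: real
  assumes q: "0 < q" "q < 1"
  shows "ennreal ((a 0 - z)^2) \<le> 2 * ennreal ((a n - z)^2)
     + ennreal (2 / (1 - q)) * (\<Sum>j<n. ennreal (1 / q^j) * ennreal ((a (Suc j) - a j)^2))"
proof -
  define v where "v = (\<Sum>j<n. a (Suc j) - a j)"
  define S where "S = (\<Sum>j<n. (a (Suc j) - a j)^2 / q^j)"
  have S: "0 \<le> S" unfolding S_def using q by (intro sum_nonneg) auto
  have tel: "a 0 - z = (a n - z) - v" unfolding v_def by (simp add: sum_lessThan_telescope)
  have "v = (\<Sum>j<n. sqrt (q^j) * ((a (Suc j) - a j) / sqrt (q^j)))"
    unfolding v_def using q by (intro sum.cong) auto
  then have "v^2 \<le> (\<Sum>j<n. (sqrt (q^j))^2) * (\<Sum>j<n. ((a (Suc j) - a j) / sqrt (q^j))^2)"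
    by (simp only: Cauchy_Schwarz_ineq_sum)
  also have "\<dots> = (\<Sum>j<n. q^j) * S"
    unfolding S_def using q by (simp add: power_divide)
  also have "\<dots> \<le> (1 / (1 - q)) * S"
    using q S by (intro mult_right_mono geometric_sum_le) auto
  finally have "(a 0 - z)^2 \<le> 2 * (a n - z)^2 + 2 / (1 - q) * S"
    unfolding tel using sq_diff_le[of "a n - z" v] by simp
  then have "ennreal ((a 0 - z)^2) \<le> ennreal (2 * (a n - z)^2 + 2 / (1 - q) * S)"
    by (rule ennreal_leI)
  also have "\<dots> = ennreal (2 * (a n - z)^2) + ennreal (2 / (1 - q) * S)"
    using q S by (intro ennreal_plus) auto
  also have "ennreal (2 * (a n - z)^2) = 2 * ennreal ((a n - z)^2)"
    by (simp add: ennreal_mult)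
  also have "ennreal (2 / (1 - q) * S)
      = ennreal (2 / (1 - q)) * (\<Sum>j<n. ennreal (1 / q^j) * ennreal ((a (Suc j) - a j)^2))"
    unfolding S_def using q by (simp add: ennreal_mult[symmetric] sum_nonneg)
  finally show ?thesis .
qed

lemma set_integral_Icc_minus_Icc:
  fixes w :: "real \<Rightarrow> real"
  assumes wi: "set_integrable lborel {a..b} w" and "a \<le> \<tau>" "\<tau> \<le> b"
  shows "(LINT \<sigma>:{a..b}|lborel. w \<sigma>) - (LINT \<sigma>:{a..\<tau>}|lborel. w \<sigma>) = (LINT \<sigma>:{\<tau><..b}|lborel. w \<sigma>)"
proof -
  have "set_integrable lborel {a..\<tau>} w" "set_integrable lborel {\<tau><..b} w"
    by (rule set_integrable_subset[OF wi]; use assms in auto)+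
  moreover have "{a..b} = {a..\<tau>} \<union> {\<tau><..b}" "{a..\<tau>} \<inter> {\<tau><..b} = {}"
    using assms by auto
  ultimately show ?thesis by (simp add: set_integral_Un)
qed

lemma abs_minus_endpoint_le_nn_integral_abs:
  fixes f w :: "real \<Rightarrow> real"
  assumes [measurable]: "w \<in> borel_measurable lborel"
    and \<tau>: "\<tau> \<in> {a..b}" and "t0 \<le> a" and wi: "set_integrable lborel {t0..b} w"
    and rep\<tau>: "f \<tau> = f t0 + (LINT \<sigma>:{t0..\<tau>}|lborel. w \<sigma>)"
    and repb: "f b = f t0 + (LINT \<sigma>:{t0..b}|lborel. w \<sigma>)"
  shows "ennreal \<bar>f \<tau> - f b\<bar> \<le> (\<integral>\<^sup>+\<sigma>. ennreal \<bar>w \<sigma>\<bar> * indicator {a..b} \<sigma> \<partial>lborel)"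
proof -
  have "f \<tau> - f b = - ((LINT \<sigma>:{t0..b}|lborel. w \<sigma>) - (LINT \<sigma>:{t0..\<tau>}|lborel. w \<sigma>))"
    using rep\<tau> repb by simp
  also have "\<dots> = - (LINT \<sigma>:{\<tau><..b}|lborel. w \<sigma>)"
    using \<tau> \<open>t0 \<le> a\<close> by (subst set_integral_Icc_minus_Icc[OF wi]) auto
  finally have "ennreal \<bar>f \<tau> - f b\<bar> = ennreal \<bar>LINT \<sigma>:{\<tau><..b}|lborel. w \<sigma>\<bar>" by simp
  also have "\<dots> \<le> (\<integral>\<^sup>+\<sigma>. ennreal \<bar>w \<sigma>\<bar> * indicator {\<tau><..b} \<sigma> \<partial>lborel)"
    by (rule abs_set_integral_le_nn_integral) auto
  also have "\<dots> \<le> (\<integral>\<^sup>+\<sigma>. ennreal \<bar>w \<sigma>\<bar> * indicator {a..b} \<sigma> \<partial>lborel)"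
    using \<tau> by (intro nn_integral_mono) (auto simp: indicator_def)
  finally show ?thesis .
qed

lemma sq_interval_avg_minus_endpoint_le_H1:
  fixes f w :: "real \<Rightarrow> real"
  assumes [measurable]: "f \<in> borel_measurable lborel" "w \<in> borel_measurable lborel"
    and "t0 \<le> a" and ab: "a < b"
    and fi: "set_integrable lborel {a..b} f" and wi: "set_integrable lborel {t0..b} w"
    and rep: "AE \<tau> in lborel. \<tau> \<in> {a..b} \<longrightarrow> f \<tau> = f t0 + (LINT \<sigma>:{t0..\<tau>}|lborel. w \<sigma>)"
    and repb: "f b = f t0 + (LINT \<sigma>:{t0..b}|lborel. w \<sigma>)"
  shows "ennreal ((interval_avg a b f - f b)^2)
     \<le> ennreal (b - a) * (\<integral>\<^sup>+\<sigma>. ennreal ((w \<sigma>)^2) * indicator {a..b} \<sigma> \<partial>lborel)"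
proof -
  define Wn where "Wn = (\<integral>\<^sup>+\<sigma>. ennreal \<bar>w \<sigma>\<bar> * indicator {a..b} \<sigma> \<partial>lborel)"
  have "AE \<tau> in lborel. ennreal \<bar>f \<tau> - f b\<bar> * indicator {a..b} \<tau> \<le> Wn * indicator {a..b} \<tau>"
    using rep
  proof eventually_elim
    case (elim \<tau>)
    show ?case
    proof (cases "\<tau> \<in> {a..b}")
      case True
      then have "ennreal \<bar>f \<tau> - f b\<bar> \<le> Wn"
        unfolding Wn_def using elim
        by (intro abs_minus_endpoint_le_nn_integral_abs[OF assms(2) True \<open>t0 \<le> a\<close> wi _ repb]) simp
      then show ?thesis using True by simp
    qed simp
  qed
  then have "ennreal \<bar>LINT \<tau>:{a..b}|lborel. f \<tau> - f b\<bar> \<le> (\<integral>\<^sup>+\<tau>. Wn * indicator {a..b} \<tau> \<partial>lborel)"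
    by (intro order.trans[OF abs_set_integral_le_nn_integral] nn_integral_mono_AE) auto
  also have "\<dots> = Wn * ennreal (b - a)"
    using ab by (subst nn_integral_cmult) auto
  finally have "ennreal (1 / (b - a)) * ennreal \<bar>LINT \<tau>:{a..b}|lborel. f \<tau> - f b\<bar>
      \<le> ennreal (1 / (b - a)) * (Wn * ennreal (b - a))"
    by (rule mult_left_mono) simp
  also have "\<dots> = Wn"
    using ab by (simp add: ennreal_mult[symmetric] mult.commute mult.left_commute)
  finally have avg_le: "ennreal \<bar>interval_avg a b f - f b\<bar> \<le> Wn"
    unfolding interval_avg_minus_const[OF ab fi]
    using ab by (simp add: ennreal_mult[symmetric] abs_mult)
  have "ennreal ((interval_avg a b f - f b)^2) = (ennreal \<bar>interval_avg a b f - f b\<bar>)^2"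
    by (simp add: ennreal_power)
  also have "\<dots> \<le> Wn^2" by (rule power_mono[OF avg_le]) simp
  also have "\<dots> \<le> ennreal (b - a) * (\<integral>\<^sup>+\<sigma>. ennreal ((w \<sigma>)^2) * indicator {a..b} \<sigma> \<partial>lborel)"
    unfolding Wn_def using ab by (intro nn_integral_abs_Icc_squared_le) auto
  finally show ?thesis .
qed

section \<open>Time meshes\<close>

lemma time_mesh_mono:
  assumes tm: "time_mesh T M t \<kappa>" and "i \<le> j" "j \<le> M"
  shows "t i \<le> t j"
  using assms(2,3)
proof (induction j)
  case (Suc j)
  show ?case
  proof (cases "i = Suc j")
    case False
    then have "t i \<le> t j" using Suc by simp
    moreover have "t j < t (Suc j)"
      using tm Suc.prems unfolding time_mesh_def by (metis atLeastAtMost_iff diff_Suc_1 le_add1 plus_1_eq_Suc)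
    ultimately show ?thesis by simp
  qed simp
qed simp

lemma time_mesh_range:
  assumes "time_mesh T M t \<kappa>" "m \<le> M"
  shows "0 \<le> t m" "t m \<le> T"
  using time_mesh_mono[OF assms(1), of 0 m] time_mesh_mono[OF assms(1), of m M] assms
  unfolding time_mesh_def by auto

lemma time_mesh_less:
  assumes "time_mesh T M t \<kappa>" "m \<in> {1..M}"
  shows "t (m - 1) < t m"
  using assms unfolding time_mesh_def by auto

lemma time_mesh_intervals_disjoint:
  assumes tm: "time_mesh T M t \<kappa>" and m: "m \<in> {1..M}" "m' \<in> {1..M}" "m \<noteq> m'"
  shows "{t (m - 1)<..<t m} \<inter> {t (m' - 1)<..<t m'} = {}"
proof -
  have *: "{t (i - 1)<..<t i} \<inter> {t (j - 1)<..<t j} = {}" if "i \<in> {1..M}" "j \<in> {1..M}" "i < j" for i j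
  proof -
    have "t i \<le> t (j - 1)" using time_mesh_mono[OF tm, of i "j - 1"] that by auto
    then show ?thesis by auto
  qed
  show ?thesis
    using *[of m m'] *[of m' m] m by (cases "m < m'") auto
qed

lemma time_mesh_interval_subset:
  assumes tm: "time_mesh T M t \<kappa>" and m: "m \<in> {1..M}"
  shows "{t (m - 1)<..<t m} \<subseteq> {0<..<T}"
  using time_mesh_range[OF tm, of "m - 1"] time_mesh_range[OF tm, of m] m by fastforce

lemma time_mesh_step_ratio:
  assumes tm: "time_mesh T M t \<kappa>" and m: "m \<in> {2..M}"
  shows "mstep t (m - 1) / mstep t m \<le> \<bar>\<kappa>\<bar>" "mstep t m \<le> mstep t (m - 1)"
proof -
  have pos: "0 < mstep t m" using tm m unfolding time_mesh_def mstep_def by auto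
  have "m - 1 \<in> {1..M}" using m by auto
  then have "mstep t (m - 1) \<le> Max (mstep t ` {1..M})" by (intro Max_ge) auto
  then have "mstep t (m - 1) / mstep t m \<le> Max (mstep t ` {1..M}) / mstep t m"
    using pos by (intro divide_right_mono) auto
  also have "\<dots> \<le> \<kappa>" using tm m unfolding time_mesh_def by auto
  finally show "mstep t (m - 1) / mstep t m \<le> \<bar>\<kappa>\<bar>" by simp
  show "mstep t m \<le> mstep t (m - 1)" using tm m unfolding time_mesh_def by auto
qed

lemma sum_indicator_disjoint_le:
  fixes I :: "nat \<Rightarrow> real set"
  assumes fin: "finite K" and disj: "\<And>m m'. m \<in> K \<Longrightarrow> m' \<in> K \<Longrightarrow> m \<noteq> m' \<Longrightarrow> I m \<inter> I m' = {}"
    and sub: "\<And>m. m \<in> K \<Longrightarrow> I m \<subseteq> S"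
  shows "(\<Sum>m\<in>K. (indicator (I m) u :: ennreal) * indicator (I m) v) \<le> indicator S u * indicator S v"
proof (cases "\<exists>m0\<in>K. u \<in> I m0 \<and> v \<in> I m0")
  case True
  then obtain m0 where m0: "m0 \<in> K" "u \<in> I m0" "v \<in> I m0" by blast
  have "(\<Sum>m\<in>K - {m0}. (indicator (I m) u :: ennreal) * indicator (I m) v) = 0"
    using disj m0 by (intro sum.neutral) (auto simp: indicator_def)
  then have "(\<Sum>m\<in>K. (indicator (I m) u :: ennreal) * indicator (I m) v) = 1"
    using sum.remove[OF fin m0(1), of "\<lambda>m. (indicator (I m) u :: ennreal) * indicator (I m) v"] m0 by simp
  moreover have "u \<in> S" "v \<in> S" using m0 sub[OF m0(1)] by auto
  ultimately show ?thesis by simp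
next
  case False
  then have "(\<Sum>m\<in>K. (indicator (I m) u :: ennreal) * indicator (I m) v) = 0"
    by (intro sum.neutral) (auto simp: indicator_def)
  then show ?thesis by simp
qed

lemma powr_ratio_le:
  fixes k k' s :: real
  assumes k: "0 < k" "k \<le> k'" and s: "1/2 < s" "s \<le> 1"
  shows "k powr (1 - 2 * s) * k' powr (2 * s - 1) \<le> k' / k"
proof -
  have "k powr (1 - 2 * s) = 1 / k powr (2 * s - 1)"
    using powr_minus_divide[of k "2 * s - 1"] by simp
  then have "k powr (1 - 2 * s) * k' powr (2 * s - 1) = (k' / k) powr (2 * s - 1)"
    using k by (simp add: powr_divide)
  also have "\<dots> \<le> (k' / k) powr 1" using k s by (intro powr_mono) auto
  also have "\<dots> = k' / k" using k by simp
  finally show ?thesis .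
qed

lemma sum_Icc_prev:
  fixes G :: "nat \<Rightarrow> ennreal"
  shows "(\<Sum>m\<in>{1..M}. (if 2 \<le> m then G (m - 1) else 0)) = (\<Sum>m\<in>{1..<M}. G m)"
proof (induction M)
  case (Suc M)
  then show ?case by (cases M) auto
qed simp

lemma weighted_error_le:
  fixes E G :: ennreal and k k' c r s :: real
  assumes E: "E \<le> ennreal (c * k' powr (2 * s - 1)) * G"
    and k: "0 < k" "k \<le> k'" "k' / k \<le> r" and c: "0 \<le> c" and s: "1/2 < s" "s \<le> 1"
  shows "ennreal (2 * k powr (1 - 2 * s)) * E \<le> ennreal (2 * c * r) * G"
proof -
  have "ennreal (2 * k powr (1 - 2 * s)) * E
      \<le> ennreal (2 * k powr (1 - 2 * s)) * (ennreal (c * k' powr (2 * s - 1)) * G)"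
    using E by (rule mult_left_mono) simp
  also have "\<dots> = ennreal (2 * c * (k powr (1 - 2 * s) * k' powr (2 * s - 1))) * G"
    using c by (simp add: ennreal_mult[symmetric] ac_simps)
  also have "\<dots> \<le> ennreal (2 * c * r) * G"
    using powr_ratio_le[OF k(1,2) s] k(3) c by (intro mult_right_mono ennreal_leI mult_left_mono) auto
  finally show ?thesis .
qed

text \<open>The error at t (m - 1) is charged to interval m - 1; the mesh condition
  k (m - 1) \<le> \<kappa> k m makes its weight k m powr (1 - 2 s) at most \<kappa> k (m - 1) powr (1 - 2 s).\<close>
lemma sum_weighted_errors_le:
  fixes E G :: "nat \<Rightarrow> ennreal" and k :: "nat \<Rightarrow> real"
  assumes kpos: "\<And>m. m \<in> {1..M} \<Longrightarrow> 0 < k m"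
    and ratio: "\<And>m. m \<in> {2..M} \<Longrightarrow> k (m - 1) / k m \<le> \<kappa> \<and> k m \<le> k (m - 1)"
    and E0: "E 0 = 0"
    and EG: "\<And>m. m \<in> {1..M} \<Longrightarrow> E m \<le> ennreal (c * k m powr (2 * s - 1)) * G m"
    and c: "0 \<le> c" and s: "1/2 < s" "s \<le> 1" and \<kappa>: "0 \<le> \<kappa>"
  shows "(\<Sum>m\<in>{1..M}. ennreal (2 * k m powr (1 - 2 * s)) * (E m + E (m - 1)))
     \<le> ennreal (2 * c * (1 + \<kappa>)) * (\<Sum>m\<in>{1..M}. G m)"
proof -
  have "ennreal (2 * k m powr (1 - 2 * s)) * (E m + E (m - 1))
     \<le> ennreal (2 * c * 1) * G m + ennreal (2 * c * \<kappa>) * (if 2 \<le> m then G (m - 1) else 0)"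
    if m: "m \<in> {1..M}" for m
    unfolding distrib_left
  proof (rule add_mono)
    show "ennreal (2 * k m powr (1 - 2 * s)) * E m \<le> ennreal (2 * c * 1) * G m"
      using kpos[OF m] by (intro weighted_error_le[OF EG[OF m] _ _ _ c s]) auto
    show "ennreal (2 * k m powr (1 - 2 * s)) * E (m - 1)
        \<le> ennreal (2 * c * \<kappa>) * (if 2 \<le> m then G (m - 1) else 0)"
    proof (cases "2 \<le> m")
      case True
      then have "m - 1 \<in> {1..M}" using m by auto
      then show ?thesis
        using True ratio[of m] kpos[OF m] m by (simp add: weighted_error_le[OF EG _ _ _ c s])
    qed (use E0 m in simp)
  qed
  then have "(\<Sum>m\<in>{1..M}. ennreal (2 * k m powr (1 - 2 * s)) * (E m + E (m - 1)))
     \<le> (\<Sum>m\<in>{1..M}. ennreal (2 * c) * G m + ennreal (2 * c * \<kappa>) * (if 2 \<le> m then G (m - 1) else 0))"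
    by (intro sum_mono) simp
  also have "\<dots> = ennreal (2 * c) * (\<Sum>m\<in>{1..M}. G m) + ennreal (2 * c * \<kappa>) * (\<Sum>m\<in>{1..<M}. G m)"
    by (simp only: sum.distrib sum_distrib_left[symmetric] sum_Icc_prev)
  also have "\<dots> \<le> ennreal (2 * c) * (\<Sum>m\<in>{1..M}. G m) + ennreal (2 * c * \<kappa>) * (\<Sum>m\<in>{1..M}. G m)"
    by (intro add_left_mono mult_left_mono sum_mono2) auto
  also have "\<dots> = ennreal (2 * c * (1 + \<kappa>)) * (\<Sum>m\<in>{1..M}. G m)"
  proof -
    have "ennreal (2 * c * (1 + \<kappa>)) = ennreal (2 * c) + ennreal (2 * c * \<kappa>)"
      using c \<kappa> by (subst ennreal_plus[symmetric]) (auto simp: algebra_simps)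
    then show ?thesis by (simp add: distrib_right)
  qed
  finally show ?thesis .
qed

section \<open>Functions with values in L2(\<Omega>)\<close>

lemma L2sq_lborel: "L2sq \<Omega> v = (\<integral>\<^sup>+x. ennreal ((v x)^2) * indicator \<Omega> x \<partial>lborel)"
  unfolding L2sq_def by (rule nn_integral_completion)

lemma nn_integral_Icc_eq_Ioo:
  fixes g :: "real \<Rightarrow> ennreal"
  shows "(\<integral>\<^sup>+t. g t * indicator {a..b} t \<partial>lborel) = (\<integral>\<^sup>+t. g t * indicator {a<..<b} t \<partial>lborel)"
proof (rule nn_integral_cong_AE)
  have "AE t in lborel. t \<noteq> a" "AE t in lborel. t \<noteq> b" by (rule AE_lborel_singleton)+
  then show "AE t in lborel. g t * indicator {a..b} t = g t * indicator {a<..<b} t"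
    by eventually_elim (auto simp: indicator_def)
qed

lemma nn_integral_Icc_Icc_eq_Ioo_Ioo:
  fixes F :: "real \<Rightarrow> real \<Rightarrow> ennreal"
  assumes Fm: "(\<lambda>(t, \<tau>). F t \<tau>) \<in> borel_measurable (lborel \<Otimes>\<^sub>M lborel)"
  shows "(\<integral>\<^sup>+t. \<integral>\<^sup>+\<tau>. F t \<tau> * indicator {a..b} \<tau> * indicator {a..b} t \<partial>lborel \<partial>lborel)
    = (\<integral>\<^sup>+t. \<integral>\<^sup>+\<tau>. F t \<tau> * (indicator {a<..<b} \<tau> * indicator {a<..<b} t) \<partial>lborel \<partial>lborel)"
proof -
  have [measurable]: "F t \<in> borel_measurable lborel" for t using measurable_Pair2[OF Fm, of t] by simp
  have "(\<integral>\<^sup>+t. \<integral>\<^sup>+\<tau>. F t \<tau> * indicator {a..b} \<tau> * indicator {a..b} t \<partial>lborel \<partial>lborel)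
     = (\<integral>\<^sup>+t. (\<integral>\<^sup>+\<tau>. F t \<tau> * indicator {a..b} \<tau> \<partial>lborel) * indicator {a..b} t \<partial>lborel)"
    by (intro nn_integral_cong nn_integral_multc) measurable
  also have "\<dots> = (\<integral>\<^sup>+t. (\<integral>\<^sup>+\<tau>. F t \<tau> * indicator {a<..<b} \<tau> \<partial>lborel) * indicator {a<..<b} t \<partial>lborel)"
    by (simp only: nn_integral_Icc_eq_Ioo)
  also have "\<dots> = (\<integral>\<^sup>+t. \<integral>\<^sup>+\<tau>. F t \<tau> * (indicator {a<..<b} \<tau> * indicator {a<..<b} t) \<partial>lborel \<partial>lborel)"
    by (intro nn_integral_cong) (simp add: nn_integral_multc[symmetric] mult.assoc)
  finally show ?thesis .
qed

lemma L2L2sq_eq_nn_integral_swap: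
  fixes w :: "real \<Rightarrow> 'a::euclidean_space \<Rightarrow> real"
  assumes [measurable]: "(\<lambda>(\<tau>, x). w \<tau> x) \<in> borel_measurable (lborel \<Otimes>\<^sub>M lborel)"
    "\<Omega> \<in> sets lborel" "J \<in> sets lborel"
  shows "L2L2sq J \<Omega> w = (\<integral>\<^sup>+x. (\<integral>\<^sup>+t. ennreal ((w t x)^2) * indicator J t \<partial>lborel) * indicator \<Omega> x \<partial>lborel)"
proof -
  define F where "F t x = ennreal ((w t x)^2) * indicator J t * (indicator \<Omega> x :: ennreal)" for t x
  have "L2L2sq J \<Omega> w = (\<integral>\<^sup>+t. (\<integral>\<^sup>+x. F t x \<partial>lborel) \<partial>lborel)"
    unfolding L2L2sq_def L2sq_lborel F_def
    by (intro nn_integral_cong, subst nn_integral_multc[symmetric]) (measurable, simp add: ac_simps)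
  also have "\<dots> = (\<integral>\<^sup>+x. (\<integral>\<^sup>+t. F t x \<partial>lborel) \<partial>lborel)"
    by (rule lborel_pair.Fubini'[symmetric]) (simp add: F_def)
  also have "\<dots> = (\<integral>\<^sup>+x. (\<integral>\<^sup>+t. ennreal ((w t x)^2) * indicator J t \<partial>lborel) * indicator \<Omega> x \<partial>lborel)"
    unfolding F_def by (intro nn_integral_cong nn_integral_multc) measurable
  finally show ?thesis .
qed

lemma set_integrable_Icc_of_square_integrable:
  fixes f :: "real \<Rightarrow> real"
  assumes [measurable]: "f \<in> borel_measurable lborel"
    and fin: "(\<integral>\<^sup>+t. ennreal ((f t)^2) * indicator {0<..<T} t \<partial>lborel) < \<infinity>"
    and cd: "0 \<le> c" "c \<le> d" "d \<le> T"
  shows "set_integrable lborel {c..d} f"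
proof -
  have "(\<integral>\<^sup>+t. ennreal \<bar>f t\<bar> * indicator {c..d} t \<partial>lborel)^2
     \<le> ennreal (d - c) * (\<integral>\<^sup>+t. ennreal ((f t)^2) * indicator {c..d} t \<partial>lborel)"
    using cd by (intro nn_integral_abs_Icc_squared_le) auto
  also have "(\<integral>\<^sup>+t. ennreal ((f t)^2) * indicator {c..d} t \<partial>lborel)
      \<le> (\<integral>\<^sup>+t. ennreal ((f t)^2) * indicator {0..T} t \<partial>lborel)"
    using cd by (intro nn_integral_mono) (auto simp: indicator_def)
  also have "\<dots> = (\<integral>\<^sup>+t. ennreal ((f t)^2) * indicator {0<..<T} t \<partial>lborel)"
    by (rule nn_integral_Icc_eq_Ioo)
  finally have "(\<integral>\<^sup>+t. ennreal \<bar>f t\<bar> * indicator {c..d} t \<partial>lborel)^2 < \<infinity>"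
    using fin by (simp add: ennreal_mult_less_top mult_left_mono le_less_trans)
  then have "(\<integral>\<^sup>+t. ennreal \<bar>f t\<bar> * indicator {c..d} t \<partial>lborel) < \<infinity>"
    by (simp add: power_less_top_ennreal)
  moreover have "(\<integral>\<^sup>+t. ennreal (norm (indicator {c..d} t *\<^sub>R f t)) \<partial>lborel)
      = (\<integral>\<^sup>+t. ennreal \<bar>f t\<bar> * indicator {c..d} t \<partial>lborel)"
    by (intro nn_integral_cong) (auto simp: indicator_def)
  ultimately show ?thesis
    unfolding set_integrable_def by (subst integrable_iff_bounded) auto
qed

lemma AE_set_integrable_Icc_of_L2L2sq:
  fixes y :: "real \<Rightarrow> 'a::euclidean_space \<Rightarrow> real"
  assumes [measurable]: "(\<lambda>(\<tau>, x). y \<tau> x) \<in> borel_measurable (lborel \<Otimes>\<^sub>M lborel)" "\<Omega> \<in> sets lborel"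
    and fin: "L2L2sq {0<..<T} \<Omega> y < \<infinity>" and cd: "0 \<le> c" "c \<le> d" "d \<le> T"
  shows "AE x in lborel. x \<in> \<Omega> \<longrightarrow> set_integrable lborel {c..d} (\<lambda>\<tau>. y \<tau> x)"
proof -
  have "(\<integral>\<^sup>+x. (\<integral>\<^sup>+t. ennreal ((y t x)^2) * indicator {0<..<T} t \<partial>lborel) * indicator \<Omega> x \<partial>lborel) \<noteq> \<infinity>"
    using fin L2L2sq_eq_nn_integral_swap[OF assms(1,2), of "{0<..<T}"] by simp
  then have "AE x in lborel. (\<integral>\<^sup>+t. ennreal ((y t x)^2) * indicator {0<..<T} t \<partial>lborel) * indicator \<Omega> x \<noteq> \<infinity>"
    by (intro nn_integral_PInf_AE) measurable
  then show ?thesis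
    by eventually_elim
      (auto intro: set_integrable_Icc_of_square_integrable[OF _ _ cd] simp: top.not_eq_extremum)
qed

lemma measurable_set_integral_Icc_upper:
  fixes w :: "real \<Rightarrow> 'a::euclidean_space \<Rightarrow> real"
  assumes [measurable]: "(\<lambda>(\<tau>, x). w \<tau> x) \<in> borel_measurable (lborel \<Otimes>\<^sub>M lborel)"
  shows "(\<lambda>(\<tau>, x). LINT \<sigma>:{t0..\<tau>}|lborel. w \<sigma> x) \<in> borel_measurable (lborel \<Otimes>\<^sub>M lborel)"
proof -
  define W where "W p \<sigma> = (if t0 \<le> \<sigma> \<and> \<sigma> \<le> fst p then w \<sigma> (snd p) else 0)" for p :: "real \<times> 'a" and \<sigma>
  have "(\<lambda>(p, \<sigma>). W p \<sigma>) \<in> borel_measurable ((lborel \<Otimes>\<^sub>M lborel) \<Otimes>\<^sub>M lborel)"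
    unfolding W_def by measurable
  then have "(\<lambda>p. \<integral>\<sigma>. W p \<sigma> \<partial>lborel) \<in> borel_measurable (lborel \<Otimes>\<^sub>M lborel)"
    by (rule lborel.borel_measurable_lebesgue_integral[where f = W, simplified])
  moreover have "(\<lambda>(\<tau>, x). LINT \<sigma>:{t0..\<tau>}|lborel. w \<sigma> x) = (\<lambda>p. \<integral>\<sigma>. W p \<sigma> \<partial>lborel)"
    by (auto simp: W_def set_lebesgue_integral_def indicator_def fun_eq_iff
        intro!: Bochner_Integration.integral_cong)
  ultimately show ?thesis by simp
qed

lemma L2L2sq_const:
  assumes "a \<le> b"
  shows "L2L2sq {a<..b} \<Omega> (\<lambda>_. v) = L2sq \<Omega> v * ennreal (b - a)"
  unfolding L2L2sq_def using assms
  by (subst mult.commute, subst nn_integral_cmult_indicator) (auto simp: mult.commute)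

lemma L2L2sq_le_const:
  assumes "a \<le> b" and "\<And>\<tau>. \<tau> \<in> {a..b} \<Longrightarrow> L2sq \<Omega> (w \<tau>) \<le> ennreal \<epsilon>" and "0 \<le> \<epsilon>"
  shows "L2L2sq {a..b} \<Omega> w \<le> ennreal (\<epsilon> * (b - a))"
proof -
  have "L2L2sq {a..b} \<Omega> w \<le> (\<integral>\<^sup>+\<tau>. ennreal \<epsilon> * indicator {a..b} \<tau> \<partial>lborel)"
    unfolding L2L2sq_def using assms(2) by (intro nn_integral_mono) (auto simp: indicator_def)
  also have "\<dots> = ennreal (\<epsilon> * (b - a))"
    using assms by (simp add: nn_integral_cmult_indicator ennreal_mult)
  finally show ?thesis .
qed

lemma L2sq_diff_le:
  fixes u v :: "'a::euclidean_space \<Rightarrow> real"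
  assumes [measurable]: "u \<in> borel_measurable lborel" "v \<in> borel_measurable lborel" "\<Omega> \<in> sets lborel"
  shows "L2sq \<Omega> (\<lambda>x. u x - v x) \<le> 2 * L2sq \<Omega> u + 2 * L2sq \<Omega> v"
proof -
  have "L2sq \<Omega> (\<lambda>x. u x - v x)
     \<le> (\<integral>\<^sup>+x. 2 * (ennreal ((u x)^2) * indicator \<Omega> x) + 2 * (ennreal ((v x)^2) * indicator \<Omega> x) \<partial>lborel)"
    unfolding L2sq_lborel
  proof (intro nn_integral_mono)
    fix x
    have "ennreal ((u x - v x)^2) \<le> ennreal (2 * (u x)^2 + 2 * (v x)^2)"
      by (intro ennreal_leI sq_diff_le)
    also have "\<dots> = 2 * ennreal ((u x)^2) + 2 * ennreal ((v x)^2)"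
      by (simp add: ennreal_plus ennreal_mult)
    finally show "ennreal ((u x - v x)^2) * indicator \<Omega> x
        \<le> 2 * (ennreal ((u x)^2) * indicator \<Omega> x) + 2 * (ennreal ((v x)^2) * indicator \<Omega> x)"
      by (cases "x \<in> \<Omega>") auto
  qed
  also have "\<dots> = 2 * L2sq \<Omega> u + 2 * L2sq \<Omega> v"
    unfolding L2sq_lborel by (simp add: nn_integral_add nn_integral_cmult)
  finally show ?thesis .
qed

lemma L2sq_divide:
  fixes u :: "'a::euclidean_space \<Rightarrow> real"
  assumes [measurable]: "u \<in> borel_measurable lborel" "\<Omega> \<in> sets lborel"
  shows "L2sq \<Omega> (\<lambda>x. u x / k) = ennreal (1 / k^2) * L2sq \<Omega> u"
proof -
  have "ennreal ((u x / k)^2) * indicator \<Omega> x = ennreal (1 / k^2) * (ennreal ((u x)^2) * indicator \<Omega> x)" for x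
  proof -
    have "(u x / k)^2 = 1 / k^2 * (u x)^2" by (simp add: power_divide)
    then have "ennreal ((u x / k)^2) = ennreal (1 / k^2) * ennreal ((u x)^2)"
      by (simp only:) (rule ennreal_mult; simp)
    then show ?thesis by (simp add: mult.assoc)
  qed
  then show ?thesis
    unfolding L2sq_lborel by (simp add: nn_integral_cmult)
qed

lemma sum_L2L2sq_time_mesh_le:
  fixes w :: "real \<Rightarrow> 'a::euclidean_space \<Rightarrow> real"
  assumes [measurable]: "(\<lambda>(\<tau>, x). w \<tau> x) \<in> borel_measurable (lborel \<Otimes>\<^sub>M lborel)" "\<Omega> \<in> sets lborel"
    and tm: "time_mesh T M t \<kappa>"
  shows "(\<Sum>m\<in>{1..M}. L2L2sq {t (m - 1)..t m} \<Omega> w) \<le> L2L2sq {0<..<T} \<Omega> w"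
proof -
  define F where "F u = L2sq \<Omega> (w u)" for u
  have [measurable]: "F \<in> borel_measurable lborel" unfolding F_def L2sq_lborel by measurable
  have "(\<Sum>m\<in>{1..M}. L2L2sq {t (m - 1)..t m} \<Omega> w)
     = (\<Sum>m\<in>{1..M}. (\<integral>\<^sup>+u. F u * indicator {t (m - 1)<..<t m} u \<partial>lborel))"
    unfolding L2L2sq_def F_def by (simp only: nn_integral_Icc_eq_Ioo)
  also have "\<dots> = (\<integral>\<^sup>+u. (\<Sum>m\<in>{1..M}. F u * indicator {t (m - 1)<..<t m} u) \<partial>lborel)"
    by (rule nn_integral_sum[symmetric]) measurable
  also have "\<dots> \<le> (\<integral>\<^sup>+u. F u * indicator {0<..<T} u \<partial>lborel)"
  proof (intro nn_integral_mono)
    fix u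
    have "(\<Sum>m\<in>{1..M}. F u * indicator {t (m - 1)<..<t m} u)
        = F u * (\<Sum>m\<in>{1..M}. (indicator {t (m - 1)<..<t m} u :: ennreal) * indicator {t (m - 1)<..<t m} u)"
      unfolding sum_distrib_left by (intro sum.cong refl) (simp add: indicator_def)
    also have "\<dots> \<le> F u * (indicator {0<..<T} u * indicator {0<..<T} u)"
      by (intro mult_left_mono sum_indicator_disjoint_le)
        (use time_mesh_intervals_disjoint[OF tm] time_mesh_interval_subset[OF tm] in auto)
    also have "\<dots> = F u * indicator {0<..<T} u" by (simp add: indicator_def)
    finally show "(\<Sum>m\<in>{1..M}. F u * indicator {t (m - 1)<..<t m} u) \<le> F u * indicator {0<..<T} u" .
  qed
  also have "\<dots> = L2L2sq {0<..<T} \<Omega> w"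
    unfolding L2L2sq_def F_def ..
  finally show ?thesis .
qed

lemma ennreal_le_near_of_tendsto_enn2real:
  fixes \<phi> :: "real \<Rightarrow> ennreal"
  assumes fin: "\<forall>\<tau>\<in>S. \<phi> \<tau> < \<infinity>" and "\<phi> b = 0"
    and tend: "((\<lambda>\<tau>. enn2real (\<phi> \<tau>)) \<longlongrightarrow> 0) (at b within S)" and "0 < \<epsilon>"
  shows "\<exists>\<delta>>0. \<forall>\<tau>\<in>S. dist \<tau> b < \<delta> \<longrightarrow> \<phi> \<tau> \<le> ennreal \<epsilon>"
proof -
  obtain \<delta> where "\<delta> > 0" and \<delta>: "\<forall>\<tau>\<in>S. \<tau> \<noteq> b \<and> dist \<tau> b < \<delta> \<longrightarrow> dist (enn2real (\<phi> \<tau>)) 0 < \<epsilon>"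
    using tendstoD[OF tend \<open>0 < \<epsilon>\<close>] unfolding eventually_at by blast
  have "\<phi> \<tau> \<le> ennreal \<epsilon>" if "\<tau> \<in> S" "dist \<tau> b < \<delta>" for \<tau>
  proof (cases "\<tau> = b")
    case False
    then have "ennreal (enn2real (\<phi> \<tau>)) \<le> ennreal \<epsilon>"
      using \<delta> that by (intro ennreal_leI) fastforce
    then show ?thesis using fin that by simp
  qed (simp add: \<open>\<phi> b = 0\<close>)
  then show ?thesis using \<open>\<delta> > 0\<close> by blast
qed

lemma le_mult_INF_ennreal:
  fixes X :: ennreal and f :: "'b \<Rightarrow> ennreal"
  assumes all: "\<And>w. w \<in> S \<Longrightarrow> X \<le> ennreal C * f w" and C: "0 < C"
  shows "X \<le> ennreal C * (INF w\<in>S. f w)"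
proof -
  have inv: "ennreal C * ennreal (1 / C) = 1" using C by (simp add: ennreal_mult[symmetric])
  have "X * ennreal (1 / C) \<le> (INF w\<in>S. f w)"
  proof (rule INF_greatest)
    fix w assume "w \<in> S"
    then have "X * ennreal (1 / C) \<le> ennreal C * f w * ennreal (1 / C)"
      using all by (intro mult_right_mono) auto
    also have "\<dots> = f w * (ennreal C * ennreal (1 / C))" by (simp only: ac_simps)
    also have "\<dots> = f w" using inv by simp
    finally show "X * ennreal (1 / C) \<le> f w" .
  qed
  then have "X * ennreal (1 / C) * ennreal C \<le> (INF w\<in>S. f w) * ennreal C"
    by (rule mult_right_mono) simp
  moreover have "X * ennreal (1 / C) * ennreal C = X * (ennreal C * ennreal (1 / C))"
    by (simp only: ac_simps)
  ultimately show ?thesis using inv by (simp add: ac_simps)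
qed

section \<open>Endpoint errors of the time averages\<close>

lemma Pk_eq_interval_avg:
  "m \<noteq> 0 \<Longrightarrow> Pk t y m x = interval_avg (t (m - 1)) (t m) (\<lambda>\<tau>. y \<tau> x)"
  unfolding Pk_def interval_avg_def mstep_def by simp

definition Pk_error :: "(nat \<Rightarrow> real) \<Rightarrow> 'a::euclidean_space set \<Rightarrow> (real \<Rightarrow> 'a \<Rightarrow> real) \<Rightarrow> nat \<Rightarrow> ennreal" where
  "Pk_error t \<Omega> y m = L2sq \<Omega> (\<lambda>x. Pk t y m x - y (t m) x)"

lemma Pk_error_0: "Pk_error t \<Omega> y 0 = 0"
  unfolding Pk_error_def Pk_def L2sq_def by simp

definition gk_weighted_sum :: "real \<Rightarrow> (nat \<Rightarrow> real) \<Rightarrow> 'a::euclidean_space set \<Rightarrow> (real \<Rightarrow> 'a \<Rightarrow> real) \<Rightarrow> nat \<Rightarrow> ennreal" where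
  "gk_weighted_sum s t \<Omega> y M =
     (\<Sum>m = 1..M. ennreal (mstep t m powr (1 - (2 * s - 1))) * L2L2sq {t (m - 1)<..t m} \<Omega> (\<lambda>_. gk t y m))"

text \<open>The L2 distance between consecutive dyadic averages towards an endpoint decays like
  dyadic_ratio s ^ j, which is summable exactly because s > 1/2.\<close>
definition dyadic_ratio :: "real \<Rightarrow> real" where
  "dyadic_ratio s = sqrt ((1/2) powr (2 * s - 1))"

definition dyadic_const :: "real \<Rightarrow> real" where
  "dyadic_const s = 4 / (1 - dyadic_ratio s)^2"

lemma dyadic_ratio_bounds:
  assumes "1/2 < s"
  shows "0 < dyadic_ratio s" "dyadic_ratio s < 1" "(dyadic_ratio s)^2 = (1/2) powr (2 * s - 1)"
proof -
  have "(1/2::real) powr (2 * s - 1) < (1/2) powr 0" using assms by (intro powr_less_mono') auto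
  then show "0 < dyadic_ratio s" "dyadic_ratio s < 1" "(dyadic_ratio s)^2 = (1/2) powr (2 * s - 1)"
    unfolding dyadic_ratio_def by auto
qed

context
  fixes y :: "real \<Rightarrow> 'a::euclidean_space \<Rightarrow> real" and \<Omega> :: "'a set"
  assumes y_measurable[measurable]: "(\<lambda>(\<tau>, x). y \<tau> x) \<in> borel_measurable (lborel \<Otimes>\<^sub>M lborel)"
    and \<Omega>_measurable[measurable]: "\<Omega> \<in> sets lborel"
begin

lemma y_slice_measurable: "(\<lambda>\<tau>. y \<tau> x) \<in> borel_measurable lborel"
  by measurable

lemma interval_avg_measurable[measurable]:
  "(\<lambda>x. interval_avg a b (\<lambda>\<tau>. y \<tau> x)) \<in> borel_measurable lborel"
proof -
  have "(\<lambda>x. LINT \<tau>:{a..b}|lborel. y \<tau> x) \<in> borel_measurable lborel"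
    unfolding set_lebesgue_integral_def by (rule lborel.borel_measurable_lebesgue_integral) measurable
  then show ?thesis unfolding interval_avg_def by measurable
qed

lemma Pk_measurable[measurable]: "(\<lambda>x. Pk t y m x) \<in> borel_measurable lborel"
proof (cases "m = 0")
  case True
  then show ?thesis by (simp add: Pk_def)
next
  case False
  then show ?thesis by (simp add: Pk_eq_interval_avg)
qed

lemma L2sq_diff_finite:
  assumes "L2sq \<Omega> (y t) < \<infinity>" "L2sq \<Omega> (y u) < \<infinity>"
  shows "L2sq \<Omega> (\<lambda>x. y t x - y u x) < \<infinity>"
proof -
  have "L2sq \<Omega> (\<lambda>x. y t x - y u x) \<le> 2 * L2sq \<Omega> (y t) + 2 * L2sq \<Omega> (y u)"
    by (rule L2sq_diff_le) measurable
  also have "\<dots> < \<infinity>" using assms by (simp add: ennreal_mult_less_top)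
  finally show ?thesis .
qed

lemma gagliardo_sq_Icc_eq_nn_integral:
  "gagliardo_sq s {a..b} \<Omega> y = (\<integral>\<^sup>+x. gagliardo_Icc (1 + 2 * s) a b (\<lambda>\<tau>. y \<tau> x) * indicator \<Omega> x \<partial>lborel)"
proof -
  define H where "H t \<tau> x = ennreal (1 / \<bar>t - \<tau>\<bar> powr (1 + 2 * s)) * ennreal ((y t x - y \<tau> x)^2)
    * indicator {a..b} \<tau> * indicator {a..b} t * (indicator \<Omega> x :: ennreal)" for t \<tau> x
  have [measurable]: "(\<lambda>(\<tau>, x). H t \<tau> x) \<in> borel_measurable (lborel \<Otimes>\<^sub>M lborel)" for t
    unfolding H_def by measurable
  have "(\<integral>\<^sup>+x. gagliardo_Icc (1 + 2 * s) a b (\<lambda>\<tau>. y \<tau> x) * indicator \<Omega> x \<partial>lborel)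
     = (\<integral>\<^sup>+x. \<integral>\<^sup>+t. \<integral>\<^sup>+\<tau>. H t \<tau> x \<partial>lborel \<partial>lborel \<partial>lborel)"
    unfolding gagliardo_Icc_def H_def by (intro nn_integral_cong nn_integral_nn_integral_multc) measurable
  also have "\<dots> = (\<integral>\<^sup>+t. \<integral>\<^sup>+x. \<integral>\<^sup>+\<tau>. H t \<tau> x \<partial>lborel \<partial>lborel \<partial>lborel)"
    by (rule lborel_pair.Fubini') (simp add: H_def)
  also have "\<dots> = (\<integral>\<^sup>+t. \<integral>\<^sup>+\<tau>. \<integral>\<^sup>+x. H t \<tau> x \<partial>lborel \<partial>lborel \<partial>lborel)"
    by (intro nn_integral_cong lborel_pair.Fubini') simp
  also have "\<dots> = gagliardo_sq s {a..b} \<Omega> y"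
    unfolding gagliardo_sq_def L2sq_lborel
  proof (intro nn_integral_cong)
    fix t \<tau>
    have "(\<integral>\<^sup>+x. H t \<tau> x \<partial>lborel) = (\<integral>\<^sup>+x. (ennreal (1 / \<bar>t - \<tau>\<bar> powr (1 + 2 * s))
        * indicator {a..b} \<tau> * indicator {a..b} t) * (ennreal ((y t x - y \<tau> x)^2) * indicator \<Omega> x) \<partial>lborel)"
      unfolding H_def by (intro nn_integral_cong) (simp add: ac_simps)
    also have "\<dots> = (ennreal (1 / \<bar>t - \<tau>\<bar> powr (1 + 2 * s)) * indicator {a..b} \<tau> * indicator {a..b} t)
        * (\<integral>\<^sup>+x. ennreal ((y t x - y \<tau> x)^2) * indicator \<Omega> x \<partial>lborel)"
      by (rule nn_integral_cmult) measurable
    finally show "(\<integral>\<^sup>+x. H t \<tau> x \<partial>lborel) = ennreal (1 / \<bar>t - \<tau>\<bar> powr (1 + 2 * s))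
        * (\<integral>\<^sup>+x. ennreal ((y t x - y \<tau> x)^2) * indicator \<Omega> x \<partial>lborel) * indicator {a..b} \<tau> * indicator {a..b} t"
      by (simp add: ac_simps)
  qed
  finally show ?thesis by (rule sym)
qed

lemma L2sq_halved_avg_diff_le:
  assumes ac: "a \<le> c" and cb: "c < b" and s: "0 < s"
    and good: "AE x in lborel. x \<in> \<Omega> \<longrightarrow> set_integrable lborel {a..b} (\<lambda>\<tau>. y \<tau> x)"
  shows "L2sq \<Omega> (\<lambda>x. interval_avg ((c + b) / 2) b (\<lambda>\<tau>. y \<tau> x) - interval_avg c b (\<lambda>\<tau>. y \<tau> x))
    \<le> ennreal (2 * (b - c) powr (2 * s - 1)) * gagliardo_sq s {a..b} \<Omega> y"
proof -
  define W where "W x = gagliardo_Icc (1 + 2 * s) a b (\<lambda>\<tau>. y \<tau> x)" for x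
  have [measurable]: "W \<in> borel_measurable lborel"
    unfolding W_def gagliardo_Icc_def by measurable
  have "L2sq \<Omega> (\<lambda>x. interval_avg ((c + b) / 2) b (\<lambda>\<tau>. y \<tau> x) - interval_avg c b (\<lambda>\<tau>. y \<tau> x))
     \<le> (\<integral>\<^sup>+x. ennreal (2 * (b - c) powr (2 * s - 1)) * (W x * indicator \<Omega> x) \<partial>lborel)"
    unfolding L2sq_lborel
  proof (rule nn_integral_mono_AE)
    show "AE x in lborel. ennreal ((interval_avg ((c + b) / 2) b (\<lambda>\<tau>. y \<tau> x) - interval_avg c b (\<lambda>\<tau>. y \<tau> x))^2)
        * indicator \<Omega> x \<le> ennreal (2 * (b - c) powr (2 * s - 1)) * (W x * indicator \<Omega> x)"
      using good
    proof eventually_elim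
      case (elim x)
      show ?case
      proof (cases "x \<in> \<Omega>")
        case True
        then have "set_integrable lborel {c..b} (\<lambda>\<tau>. y \<tau> x)"
          using elim ac by (auto intro: set_integrable_subset)
        then have "ennreal ((interval_avg ((c + b) / 2) b (\<lambda>\<tau>. y \<tau> x) - interval_avg c b (\<lambda>\<tau>. y \<tau> x))^2)
            \<le> ennreal (2 * (b - c) powr (2 * s - 1)) * gagliardo_Icc (1 + 2 * s) c b (\<lambda>\<tau>. y \<tau> x)"
          by (rule sq_halved_interval_avg_diff_le_gagliardo[OF y_slice_measurable cb s])
        also have "\<dots> \<le> ennreal (2 * (b - c) powr (2 * s - 1)) * W x"
          unfolding W_def by (intro mult_left_mono gagliardo_Icc_mono ac) simp
        finally show ?thesis using True by simp
      qed simp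
    qed
  qed
  also have "\<dots> = ennreal (2 * (b - c) powr (2 * s - 1)) * gagliardo_sq s {a..b} \<Omega> y"
    unfolding gagliardo_sq_Icc_eq_nn_integral W_def[symmetric] by (rule nn_integral_cmult) measurable
  finally show ?thesis .
qed

lemma L2sq_avg_minus_endpoint_le:
  assumes cb: "c < b" and \<epsilon>: "0 \<le> \<epsilon>"
    and good: "AE x in lborel. x \<in> \<Omega> \<longrightarrow> set_integrable lborel {c..b} (\<lambda>\<tau>. y \<tau> x)"
    and near: "\<And>\<tau>. \<tau> \<in> {c..b} \<Longrightarrow> L2sq \<Omega> (\<lambda>x. y \<tau> x - y b x) \<le> ennreal \<epsilon>"
  shows "L2sq \<Omega> (\<lambda>x. interval_avg c b (\<lambda>\<tau>. y \<tau> x) - y b x) \<le> ennreal \<epsilon>"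
proof -
  define I where "I x = (\<integral>\<^sup>+\<tau>. ennreal ((y \<tau> x - y b x)^2) * indicator {c..b} \<tau> \<partial>lborel)" for x
  have "L2sq \<Omega> (\<lambda>x. interval_avg c b (\<lambda>\<tau>. y \<tau> x) - y b x)
     \<le> (\<integral>\<^sup>+x. ennreal (1 / (b - c)) * (I x * indicator \<Omega> x) \<partial>lborel)"
    unfolding L2sq_lborel
  proof (rule nn_integral_mono_AE)
    show "AE x in lborel. ennreal ((interval_avg c b (\<lambda>\<tau>. y \<tau> x) - y b x)^2) * indicator \<Omega> x
        \<le> ennreal (1 / (b - c)) * (I x * indicator \<Omega> x)"
      using good
    proof eventually_elim
      case (elim x)
      show ?case
      proof (cases "x \<in> \<Omega>")
        case True
        then have "ennreal ((interval_avg c b (\<lambda>\<tau>. y \<tau> x) - y b x)^2) \<le> ennreal (1 / (b - c)) * I x"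
          unfolding I_def using elim cb by (intro sq_interval_avg_minus_le[OF y_slice_measurable]) auto
        then show ?thesis using True by simp
      qed simp
    qed
  qed
  also have "\<dots> = ennreal (1 / (b - c)) * L2L2sq {c..b} \<Omega> (\<lambda>\<tau> x. y \<tau> x - y b x)"
    unfolding I_def by (subst L2L2sq_eq_nn_integral_swap) (measurable, rule nn_integral_cmult, measurable)
  also have "\<dots> \<le> ennreal (1 / (b - c)) * ennreal (\<epsilon> * (b - c))"
    using near cb \<epsilon> by (intro mult_left_mono L2L2sq_le_const) auto
  also have "\<dots> = ennreal \<epsilon>"
    using cb \<epsilon> by (simp add: ennreal_mult[symmetric])
  finally show ?thesis .
qed

lemma L2sq_dyadic_avg_step_le:
  assumes ab: "a < b" and s: "0 < s"
    and good: "AE x in lborel. x \<in> \<Omega> \<longrightarrow> set_integrable lborel {a..b} (\<lambda>\<tau>. y \<tau> x)"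
  shows "L2sq \<Omega> (\<lambda>x. interval_avg (b - (b - a) * (1/2)^Suc j) b (\<lambda>\<tau>. y \<tau> x)
                     - interval_avg (b - (b - a) * (1/2)^j) b (\<lambda>\<tau>. y \<tau> x))
    \<le> ennreal (2 * (b - a) powr (2 * s - 1) * ((1/2) powr (2 * s - 1))^j) * gagliardo_sq s {a..b} \<Omega> y"
proof -
  define c where "c = b - (b - a) * (1/2)^j"
  have "(b - a) * (1/2)^j \<le> b - a" using ab by (simp add: power_le_one mult_left_le)
  then have ac: "a \<le> c" unfolding c_def by linarith
  have cb: "c < b" using ab by (simp add: c_def)
  have mid: "b - (b - a) * (1/2)^Suc j = (c + b) / 2" by (simp add: c_def field_simps)
  have "(x^j) powr e = (x powr e)^j" if "0 \<le> x" for x e :: real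
    using that by (induction j) (auto simp: powr_mult)
  then have "(b - c) powr (2 * s - 1) = (b - a) powr (2 * s - 1) * ((1/2) powr (2 * s - 1))^j"
    using ab by (simp add: c_def powr_mult)
  then show ?thesis
    using L2sq_halved_avg_diff_le[OF ac cb s good] unfolding mid c_def[symmetric] by (simp add: mult.assoc)
qed

lemma L2sq_avg_minus_endpoint_le_dyadic:
  assumes ab: "a < b" and s: "1/2 < s"
    and good: "AE x in lborel. x \<in> \<Omega> \<longrightarrow> set_integrable lborel {a..b} (\<lambda>\<tau>. y \<tau> x)"
  shows "L2sq \<Omega> (\<lambda>x. interval_avg a b (\<lambda>\<tau>. y \<tau> x) - y b x)
    \<le> 2 * L2sq \<Omega> (\<lambda>x. interval_avg (b - (b - a) * (1/2)^n) b (\<lambda>\<tau>. y \<tau> x) - y b x)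
      + ennreal (dyadic_const s * (b - a) powr (2 * s - 1)) * gagliardo_sq s {a..b} \<Omega> y"
proof -
  define q where "q = dyadic_ratio s"
  define K where "K = 2 * (b - a) powr (2 * s - 1)"
  define G where "G = gagliardo_sq s {a..b} \<Omega> y"
  define A where "A j x = interval_avg (b - (b - a) * (1/2)^j) b (\<lambda>\<tau>. y \<tau> x)" for j x
  have q: "0 < q" "q < 1" and q2: "q^2 = (1/2) powr (2 * s - 1)"
    using dyadic_ratio_bounds[OF s] by (auto simp: q_def)
  have [measurable]: "(\<lambda>x. A j x) \<in> borel_measurable lborel" for j
    unfolding A_def by measurable
  have step: "L2sq \<Omega> (\<lambda>x. A (Suc j) x - A j x) \<le> ennreal (K * q^j * q^j) * G" for j
    using L2sq_dyadic_avg_step_le[OF ab _ good, of s j] s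
    unfolding A_def K_def G_def q2[symmetric] by (simp add: power2_eq_square power_mult_distrib mult.assoc)
  have tel: "ennreal ((A 0 x - y b x)^2) \<le> 2 * ennreal ((A n x - y b x)^2)
      + ennreal (2 / (1 - q)) * (\<Sum>j<n. ennreal (1 / q^j) * ennreal ((A (Suc j) x - A j x)^2))" for x
    using sq_telescope_le[OF q, of "\<lambda>j. A j x" "y b x" n] by simp
  have "L2sq \<Omega> (\<lambda>x. A 0 x - y b x)
      \<le> (\<integral>\<^sup>+x. 2 * (ennreal ((A n x - y b x)^2) * indicator \<Omega> x) + ennreal (2 / (1 - q))
          * (\<Sum>j<n. ennreal (1 / q^j) * (ennreal ((A (Suc j) x - A j x)^2) * indicator \<Omega> x)) \<partial>lborel)"
    unfolding L2sq_lborel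
    by (intro nn_integral_mono) (use tel in \<open>simp split: split_indicator\<close>)
  also have "\<dots> = 2 * L2sq \<Omega> (\<lambda>x. A n x - y b x)
      + ennreal (2 / (1 - q)) * (\<Sum>j<n. ennreal (1 / q^j) * L2sq \<Omega> (\<lambda>x. A (Suc j) x - A j x))"
    unfolding L2sq_lborel by (simp add: nn_integral_add nn_integral_cmult nn_integral_sum)
  also have "\<dots> \<le> 2 * L2sq \<Omega> (\<lambda>x. A n x - y b x)
      + ennreal (2 / (1 - q)) * (\<Sum>j<n. ennreal (1 / q^j) * (ennreal (K * q^j * q^j) * G))"
    using step by (intro add_left_mono mult_left_mono sum_mono) auto
  also have "(\<Sum>j<n. ennreal (1 / q^j) * (ennreal (K * q^j * q^j) * G)) \<le> ennreal (K / (1 - q)) * G"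
    using q by (intro sum_geometric_weights_le) (auto simp: K_def)
  also have "ennreal (2 / (1 - q)) * (ennreal (K / (1 - q)) * G)
      = ennreal (dyadic_const s * (b - a) powr (2 * s - 1)) * G"
    using q by (simp add: K_def dyadic_const_def q_def[symmetric] ennreal_mult[symmetric] mult.assoc[symmetric]
        power2_eq_square)
  finally show ?thesis
    unfolding A_def G_def by (simp add: mult_left_mono add_left_mono)
qed

lemma L2sq_dyadic_avg_minus_endpoint_small:
  assumes ab: "a < b"
    and good: "AE x in lborel. x \<in> \<Omega> \<longrightarrow> set_integrable lborel {a..b} (\<lambda>\<tau>. y \<tau> x)"
    and near: "\<And>\<epsilon>. 0 < \<epsilon> \<Longrightarrow> \<exists>\<delta>>0. \<forall>\<tau>\<in>{a..b}. dist \<tau> b < \<delta> \<longrightarrow> L2sq \<Omega> (\<lambda>x. y \<tau> x - y b x) \<le> ennreal \<epsilon>"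
    and "0 < \<epsilon>"
  obtains n where "L2sq \<Omega> (\<lambda>x. interval_avg (b - (b - a) * (1/2)^n) b (\<lambda>\<tau>. y \<tau> x) - y b x) \<le> ennreal \<epsilon>"
proof -
  obtain \<delta> where "\<delta> > 0"
    and \<delta>: "\<forall>\<tau>\<in>{a..b}. dist \<tau> b < \<delta> \<longrightarrow> L2sq \<Omega> (\<lambda>x. y \<tau> x - y b x) \<le> ennreal \<epsilon>"
    using near[OF \<open>0 < \<epsilon>\<close>] by auto
  obtain n where n: "(1/2::real)^n < \<delta> / (b - a)"
    using real_arch_pow_inv[of "\<delta> / (b - a)" "1/2"] \<open>\<delta> > 0\<close> ab by auto
  define c where "c = b - (b - a) * (1/2)^n"
  have "(b - a) * (1/2)^n \<le> b - a" using ab by (simp add: power_le_one mult_left_le)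
  then have ac: "a \<le> c" unfolding c_def by linarith
  have cb: "c < b" using ab by (simp add: c_def)
  have "b - c = (b - a) * (1/2)^n" by (simp add: c_def)
  also have "\<dots> < \<delta>" using n ab by (simp add: field_simps)
  finally have bc: "b - c < \<delta>" .
  have "L2sq \<Omega> (\<lambda>x. interval_avg c b (\<lambda>\<tau>. y \<tau> x) - y b x) \<le> ennreal \<epsilon>"
  proof (rule L2sq_avg_minus_endpoint_le[OF cb])
    show "AE x in lborel. x \<in> \<Omega> \<longrightarrow> set_integrable lborel {c..b} (\<lambda>\<tau>. y \<tau> x)"
      using good by eventually_elim (use ac in \<open>auto intro: set_integrable_subset\<close>)
    show "L2sq \<Omega> (\<lambda>x. y \<tau> x - y b x) \<le> ennreal \<epsilon>" if \<tau>: "\<tau> \<in> {c..b}" for \<tau>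
    proof (rule \<delta>[rule_format])
      show "\<tau> \<in> {a..b}" using \<tau> ac by simp
      show "dist \<tau> b < \<delta>" using \<tau> bc by (simp add: dist_real_def)
    qed
  qed (use \<open>0 < \<epsilon>\<close> in simp)
  then show ?thesis unfolding c_def by (rule that)
qed

lemma L2sq_avg_minus_endpoint_le_gagliardo:
  assumes ab: "a < b" and s: "1/2 < s"
    and good: "AE x in lborel. x \<in> \<Omega> \<longrightarrow> set_integrable lborel {a..b} (\<lambda>\<tau>. y \<tau> x)"
    and near: "\<And>\<epsilon>. 0 < \<epsilon> \<Longrightarrow> \<exists>\<delta>>0. \<forall>\<tau>\<in>{a..b}. dist \<tau> b < \<delta> \<longrightarrow> L2sq \<Omega> (\<lambda>x. y \<tau> x - y b x) \<le> ennreal \<epsilon>"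
  shows "L2sq \<Omega> (\<lambda>x. interval_avg a b (\<lambda>\<tau>. y \<tau> x) - y b x)
    \<le> ennreal (dyadic_const s * (b - a) powr (2 * s - 1)) * gagliardo_sq s {a..b} \<Omega> y"
proof (rule ennreal_le_epsilon)
  fix \<epsilon> :: real assume "0 < \<epsilon>"
  then obtain n where n: "L2sq \<Omega> (\<lambda>x. interval_avg (b - (b - a) * (1/2)^n) b (\<lambda>\<tau>. y \<tau> x) - y b x)
      \<le> ennreal (\<epsilon> / 2)"
    using L2sq_dyadic_avg_minus_endpoint_small[OF ab good near, of "\<epsilon> / 2"] by auto
  have "2 * L2sq \<Omega> (\<lambda>x. interval_avg (b - (b - a) * (1/2)^n) b (\<lambda>\<tau>. y \<tau> x) - y b x)
      \<le> 2 * ennreal (\<epsilon> / 2)"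
    by (rule mult_left_mono[OF n zero_le])
  also have "2 * ennreal (\<epsilon> / 2) = ennreal \<epsilon>"
  proof -
    have "ennreal (2 * (\<epsilon> / 2)) = ennreal 2 * ennreal (\<epsilon> / 2)"
      by (rule ennreal_mult) (use \<open>0 < \<epsilon>\<close> in auto)
    then show ?thesis by simp
  qed
  finally have "2 * L2sq \<Omega> (\<lambda>x. interval_avg (b - (b - a) * (1/2)^n) b (\<lambda>\<tau>. y \<tau> x) - y b x)
      + ennreal (dyadic_const s * (b - a) powr (2 * s - 1)) * gagliardo_sq s {a..b} \<Omega> y
    \<le> ennreal \<epsilon> + ennreal (dyadic_const s * (b - a) powr (2 * s - 1)) * gagliardo_sq s {a..b} \<Omega> y"
    by (rule add_right_mono)
  from order_trans[OF L2sq_avg_minus_endpoint_le_dyadic[OF ab s good, of n] this]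
  show "L2sq \<Omega> (\<lambda>x. interval_avg a b (\<lambda>\<tau>. y \<tau> x) - y b x)
      \<le> ennreal (dyadic_const s * (b - a) powr (2 * s - 1)) * gagliardo_sq s {a..b} \<Omega> y + ennreal \<epsilon>"
    by (simp only: add.commute)
qed

lemma weak_time_deriv_AE_rep:
  assumes wd: "weak_time_deriv 0 T \<Omega> y w" and "0 \<le> a" "b \<le> T"
  shows "AE x in lborel. x \<in> \<Omega> \<longrightarrow>
    (AE \<tau> in lborel. \<tau> \<in> {a..b} \<longrightarrow> y \<tau> x = y 0 x + (LINT \<sigma>:{0..\<tau>}|lborel. w \<sigma> x))"
proof -
  have [measurable]: "(\<lambda>(\<tau>, x). w \<tau> x) \<in> borel_measurable (lborel \<Otimes>\<^sub>M lborel)"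
    using wd unfolding weak_time_deriv_def by simp
  have rep: "AE x in lebesgue. x \<in> \<Omega> \<longrightarrow> y \<tau> x = y 0 x + (LINT \<sigma>:{0..\<tau>}|lborel. w \<sigma> x)"
    if "\<tau> \<in> {a..b}" for \<tau>
    using wd that assms(2,3) unfolding weak_time_deriv_def by auto
  define P where "P \<tau> x \<longleftrightarrow> \<tau> \<in> {a..b} \<and> x \<in> \<Omega> \<longrightarrow> y \<tau> x = y 0 x + (LINT \<sigma>:{0..\<tau>}|lborel. w \<sigma> x)"
    for \<tau> x
  have "(\<lambda>p. LINT \<sigma>:{0..fst p}|lborel. w \<sigma> (snd p)) \<in> borel_measurable (lborel \<Otimes>\<^sub>M lborel)"
    using measurable_set_integral_Icc_upper[of w 0] by (simp add: case_prod_beta')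
  then have "{p \<in> space (lborel \<Otimes>\<^sub>M lborel). P (fst p) (snd p)} \<in> sets (lborel \<Otimes>\<^sub>M lborel)"
    unfolding P_def by measurable
  moreover have "AE \<tau> in lborel. AE x in lborel. P \<tau> x"
  proof (rule AE_I2)
    fix \<tau>
    show "AE x in lborel. P \<tau> x"
    proof (cases "\<tau> \<in> {a..b}")
      case True
      then show ?thesis
        using rep[OF True] unfolding P_def by (simp add: AE_completion_iff)
    qed (intro AE_I2, auto simp: P_def)
  qed
  ultimately have "AE x in lborel. AE \<tau> in lborel. P \<tau> x"
    by (subst (asm) lborel_pair.AE_commute)
  then show ?thesis
    by eventually_elim (auto simp: P_def elim: eventually_mono)
qed

lemma L2sq_avg_minus_endpoint_le_L2L2sq:
  assumes w_measurable[measurable]: "(\<lambda>(\<tau>, x). w \<tau> x) \<in> borel_measurable (lborel \<Otimes>\<^sub>M lborel)"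
    and "0 \<le> a" "a < b"
    and good: "AE x in lborel. x \<in> \<Omega> \<longrightarrow> set_integrable lborel {a..b} (\<lambda>\<tau>. y \<tau> x)"
    and goodw: "AE x in lborel. x \<in> \<Omega> \<longrightarrow> set_integrable lborel {0..b} (\<lambda>\<tau>. w \<tau> x)"
    and rep: "AE x in lborel. x \<in> \<Omega> \<longrightarrow>
      (AE \<tau> in lborel. \<tau> \<in> {a..b} \<longrightarrow> y \<tau> x = y 0 x + (LINT \<sigma>:{0..\<tau>}|lborel. w \<sigma> x))"
    and repb: "AE x in lborel. x \<in> \<Omega> \<longrightarrow> y b x = y 0 x + (LINT \<sigma>:{0..b}|lborel. w \<sigma> x)"
  shows "L2sq \<Omega> (\<lambda>x. interval_avg a b (\<lambda>\<tau>. y \<tau> x) - y b x) \<le> ennreal (b - a) * L2L2sq {a..b} \<Omega> w"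
proof -
  have w_slice_measurable: "(\<lambda>\<tau>. w \<tau> x) \<in> borel_measurable lborel" for x
    by measurable
  define I where "I x = (\<integral>\<^sup>+\<sigma>. ennreal ((w \<sigma> x)^2) * indicator {a..b} \<sigma> \<partial>lborel)" for x
  have "L2sq \<Omega> (\<lambda>x. interval_avg a b (\<lambda>\<tau>. y \<tau> x) - y b x)
      \<le> (\<integral>\<^sup>+x. ennreal (b - a) * (I x * indicator \<Omega> x) \<partial>lborel)"
    unfolding L2sq_lborel
  proof (rule nn_integral_mono_AE)
    show "AE x in lborel. ennreal ((interval_avg a b (\<lambda>\<tau>. y \<tau> x) - y b x)^2) * indicator \<Omega> x
        \<le> ennreal (b - a) * (I x * indicator \<Omega> x)"
      using good goodw rep repb
    proof eventually_elim
      case (elim x)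
      show ?case
      proof (cases "x \<in> \<Omega>")
        case True
        then have "ennreal ((interval_avg a b (\<lambda>\<tau>. y \<tau> x) - y b x)^2) \<le> ennreal (b - a) * I x"
          unfolding I_def using elim \<open>0 \<le> a\<close> \<open>a < b\<close>
          by (intro sq_interval_avg_minus_endpoint_le_H1[OF y_slice_measurable w_slice_measurable]) auto
        then show ?thesis using True by simp
      qed simp
    qed
  qed
  also have "\<dots> = ennreal (b - a) * L2L2sq {a..b} \<Omega> w"
    unfolding I_def by (subst L2L2sq_eq_nn_integral_swap) (measurable, rule nn_integral_cmult, measurable)
  finally show ?thesis .
qed

lemma L2sq_avg_minus_endpoint_le_weak_deriv:
  assumes wd: "weak_time_deriv 0 T \<Omega> y w" and ab: "0 \<le> a" "a < b" "b \<le> T"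
    and y_fin: "L2L2sq {0<..<T} \<Omega> y < \<infinity>" and w_fin: "L2L2sq {0<..<T} \<Omega> w < \<infinity>"
  shows "L2sq \<Omega> (\<lambda>x. interval_avg a b (\<lambda>\<tau>. y \<tau> x) - y b x) \<le> ennreal (b - a) * L2L2sq {a..b} \<Omega> w"
proof (rule L2sq_avg_minus_endpoint_le_L2L2sq)
  show w_measurable: "(\<lambda>(\<tau>, x). w \<tau> x) \<in> borel_measurable (lborel \<Otimes>\<^sub>M lborel)"
    using wd unfolding weak_time_deriv_def by simp
  show "AE x in lborel. x \<in> \<Omega> \<longrightarrow> set_integrable lborel {a..b} (\<lambda>\<tau>. y \<tau> x)"
    using ab by (intro AE_set_integrable_Icc_of_L2L2sq[OF y_measurable \<Omega>_measurable y_fin]) auto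
  show "AE x in lborel. x \<in> \<Omega> \<longrightarrow> set_integrable lborel {0..b} (\<lambda>\<tau>. w \<tau> x)"
    using ab by (intro AE_set_integrable_Icc_of_L2L2sq[OF w_measurable \<Omega>_measurable w_fin]) auto
  show "AE x in lborel. x \<in> \<Omega> \<longrightarrow> y b x = y 0 x + (LINT \<sigma>:{0..b}|lborel. w \<sigma> x)"
    using wd ab unfolding weak_time_deriv_def by (simp add: AE_completion_iff)
qed (use ab weak_time_deriv_AE_rep[OF wd] in auto)

lemma sum_gagliardo_sq_time_mesh_le:
  assumes tm: "time_mesh T M t \<kappa>"
  shows "(\<Sum>m\<in>{1..M}. gagliardo_sq s {t (m - 1)..t m} \<Omega> y) \<le> gagliardo_sq s {0<..<T} \<Omega> y"
proof -
  define F where "F u \<tau> = ennreal (1 / \<bar>u - \<tau>\<bar> powr (1 + 2 * s))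
    * (\<integral>\<^sup>+x. ennreal ((y u x - y \<tau> x)^2) * indicator \<Omega> x \<partial>lborel)" for u \<tau>
  define H where "H m u \<tau> = F u \<tau> * (indicator {t (m - 1)<..<t m} \<tau> * indicator {t (m - 1)<..<t m} u)"
    for m u \<tau>
  have Fm[measurable]: "(\<lambda>(u, \<tau>). F u \<tau>) \<in> borel_measurable (lborel \<Otimes>\<^sub>M lborel)"
    unfolding F_def by measurable
  have [measurable]: "F u \<in> borel_measurable lborel" for u
    using measurable_Pair2[OF Fm, of u] by simp
  have "gagliardo_sq s {t (m - 1)..t m} \<Omega> y = (\<integral>\<^sup>+u. \<integral>\<^sup>+\<tau>. H m u \<tau> \<partial>lborel \<partial>lborel)" for m
    unfolding H_def nn_integral_Icc_Icc_eq_Ioo_Ioo[OF Fm, symmetric]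
    unfolding gagliardo_sq_def F_def L2sq_lborel ..
  then have "(\<Sum>m\<in>{1..M}. gagliardo_sq s {t (m - 1)..t m} \<Omega> y)
      = (\<Sum>m\<in>{1..M}. \<integral>\<^sup>+u. \<integral>\<^sup>+\<tau>. H m u \<tau> \<partial>lborel \<partial>lborel)"
    by simp
  also have "\<dots> = (\<integral>\<^sup>+u. (\<Sum>m\<in>{1..M}. \<integral>\<^sup>+\<tau>. H m u \<tau> \<partial>lborel) \<partial>lborel)"
    by (rule nn_integral_sum[symmetric]) (unfold H_def, measurable)
  also have "\<dots> = (\<integral>\<^sup>+u. \<integral>\<^sup>+\<tau>. (\<Sum>m\<in>{1..M}. H m u \<tau>) \<partial>lborel \<partial>lborel)"
    by (intro nn_integral_cong nn_integral_sum[symmetric]) (unfold H_def, measurable)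
  also have "\<dots> \<le> (\<integral>\<^sup>+u. \<integral>\<^sup>+\<tau>. F u \<tau> * (indicator {0<..<T} \<tau> * indicator {0<..<T} u) \<partial>lborel \<partial>lborel)"
  proof (intro nn_integral_mono)
    fix u \<tau>
    show "(\<Sum>m\<in>{1..M}. H m u \<tau>) \<le> F u \<tau> * (indicator {0<..<T} \<tau> * indicator {0<..<T} u)"
      unfolding H_def sum_distrib_left[symmetric]
      by (intro mult_left_mono sum_indicator_disjoint_le)
        (use time_mesh_intervals_disjoint[OF tm] time_mesh_interval_subset[OF tm] in auto)
  qed
  also have "\<dots> = gagliardo_sq s {0<..<T} \<Omega> y"
    unfolding gagliardo_sq_def F_def L2sq_lborel by (simp add: mult.assoc)
  finally show ?thesis .
qed

lemma gk_term_le_Pk_errors: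
  assumes "t (m - 1) < t m"
  shows "ennreal (mstep t m powr (1 - (2 * s - 1))) * L2L2sq {t (m - 1)<..t m} \<Omega> (\<lambda>_. gk t y m)
     \<le> ennreal (2 * mstep t m powr (1 - 2 * s)) * (Pk_error t \<Omega> y m + Pk_error t \<Omega> y (m - 1))"
proof -
  define k where "k = mstep t m"
  define E where "E = Pk_error t \<Omega> y m + Pk_error t \<Omega> y (m - 1)"
  have k: "0 < k" using assms by (simp add: k_def mstep_def)
  have "gk t y m = (\<lambda>x. ((Pk t y m x - y (t m) x) - (Pk t y (m - 1) x - y (t (m - 1)) x)) / k)"
    unfolding gk_def k_def by (simp add: fun_eq_iff diff_divide_distrib)
  then have "L2sq \<Omega> (gk t y m)
      = ennreal (1 / k^2) * L2sq \<Omega> (\<lambda>x. (Pk t y m x - y (t m) x) - (Pk t y (m - 1) x - y (t (m - 1)) x))"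
    by (simp only:) (rule L2sq_divide; measurable)
  also have "\<dots> \<le> ennreal (1 / k^2) * (2 * E)"
  proof (rule mult_left_mono)
    show "L2sq \<Omega> (\<lambda>x. (Pk t y m x - y (t m) x) - (Pk t y (m - 1) x - y (t (m - 1)) x)) \<le> 2 * E"
      unfolding E_def Pk_error_def distrib_left by (rule L2sq_diff_le) measurable
  qed simp
  also have "ennreal (1 / k^2) * (2 * E) = ennreal (2 / k^2) * E"
  proof -
    have "ennreal (1 / k^2 * 2) = ennreal (1 / k^2) * ennreal 2" by (rule ennreal_mult) auto
    then show ?thesis by (simp add: mult.assoc)
  qed
  finally have "ennreal (k powr (1 - (2 * s - 1))) * L2L2sq {t (m - 1)<..t m} \<Omega> (\<lambda>_. gk t y m)
      \<le> ennreal (k powr (1 - (2 * s - 1))) * (ennreal (2 / k^2) * E * ennreal k)"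
    using assms unfolding L2L2sq_const[OF less_imp_le[OF assms]] k_def[symmetric] mstep_def[symmetric]
    by (intro mult_left_mono mult_right_mono) auto
  also have "\<dots> = ennreal (k powr (1 - (2 * s - 1)) * (2 / k^2) * k) * E"
    using k by (simp add: ennreal_mult[symmetric] mult_ac)
  also have "k powr (1 - (2 * s - 1)) * (2 / k^2) * k = 2 * k powr (1 - 2 * s)"
  proof -
    have "k powr (1 - (2 * s - 1)) = k powr (1 - 2 * s) * k powr 1" by (subst powr_add[symmetric]) simp
    then have "k powr (1 - (2 * s - 1)) = k powr (1 - 2 * s) * k" using k by simp
    then show ?thesis using k by (simp add: power2_eq_square field_simps)
  qed
  finally show ?thesis unfolding k_def E_def .
qed

lemma gk_weighted_sum_le:
  assumes tm: "time_mesh T M t \<kappa>" and s: "1/2 < s" "s \<le> 1" and c: "0 \<le> c"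
    and err: "\<And>m. m \<in> {1..M} \<Longrightarrow> Pk_error t \<Omega> y m \<le> ennreal (c * mstep t m powr (2 * s - 1)) * G m"
  shows "gk_weighted_sum s t \<Omega> y M \<le> ennreal (2 * c * (1 + \<bar>\<kappa>\<bar>)) * (\<Sum>m\<in>{1..M}. G m)"
proof -
  have "gk_weighted_sum s t \<Omega> y M
      \<le> (\<Sum>m\<in>{1..M}. ennreal (2 * mstep t m powr (1 - 2 * s)) * (Pk_error t \<Omega> y m + Pk_error t \<Omega> y (m - 1)))"
    unfolding gk_weighted_sum_def by (intro sum_mono gk_term_le_Pk_errors time_mesh_less[OF tm])
  also have "\<dots> \<le> ennreal (2 * c * (1 + \<bar>\<kappa>\<bar>)) * (\<Sum>m\<in>{1..M}. G m)"
    using time_mesh_less[OF tm] time_mesh_step_ratio[OF tm]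
    by (intro sum_weighted_errors_le[where E = "Pk_error t \<Omega> y"] Pk_error_0 err c s) (auto simp: mstep_def)
  finally show ?thesis .
qed

lemma Pk_error_le_gagliardo:
  assumes tm: "time_mesh T M t \<kappa>" and m: "m \<in> {1..M}" and s: "1/2 < s"
    and y_fin: "L2L2sq {0<..<T} \<Omega> y < \<infinity>"
    and pt_fin: "\<forall>\<tau>\<in>{0..T}. L2sq \<Omega> (y \<tau>) < \<infinity>"
    and cont: "\<forall>\<tau>0\<in>{0..T}. ((\<lambda>\<tau>. enn2real (L2sq \<Omega> (\<lambda>x. y \<tau> x - y \<tau>0 x))) \<longlongrightarrow> 0) (at \<tau>0 within {0..T})"
  shows "Pk_error t \<Omega> y m
    \<le> ennreal (dyadic_const s * mstep t m powr (2 * s - 1)) * gagliardo_sq s {t (m - 1)..t m} \<Omega> y"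
proof -
  have a: "0 \<le> t (m - 1)" and ab: "t (m - 1) < t m" and b: "t m \<le> T"
    using time_mesh_range[OF tm] time_mesh_less[OF tm m] m by auto
  have near: "\<exists>\<delta>>0. \<forall>\<tau>\<in>{t (m - 1)..t m}. dist \<tau> (t m) < \<delta> \<longrightarrow> L2sq \<Omega> (\<lambda>x. y \<tau> x - y (t m) x) \<le> ennreal \<epsilon>"
    if "0 < \<epsilon>" for \<epsilon>
  proof -
    have "\<exists>\<delta>>0. \<forall>\<tau>\<in>{0..T}. dist \<tau> (t m) < \<delta> \<longrightarrow> L2sq \<Omega> (\<lambda>x. y \<tau> x - y (t m) x) \<le> ennreal \<epsilon>"
    proof (rule ennreal_le_near_of_tendsto_enn2real[where \<phi> = "\<lambda>\<tau>. L2sq \<Omega> (\<lambda>x. y \<tau> x - y (t m) x)"])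
      show "\<forall>\<tau>\<in>{0..T}. L2sq \<Omega> (\<lambda>x. y \<tau> x - y (t m) x) < \<infinity>"
      proof
        fix \<tau> assume "\<tau> \<in> {0..T}"
        then show "L2sq \<Omega> (\<lambda>x. y \<tau> x - y (t m) x) < \<infinity>"
          using pt_fin a ab b by (intro L2sq_diff_finite) auto
      qed
    qed (use cont a ab b that in \<open>auto simp: L2sq_def\<close>)
    then obtain \<delta> where "\<delta> > 0"
      and "\<forall>\<tau>\<in>{0..T}. dist \<tau> (t m) < \<delta> \<longrightarrow> L2sq \<Omega> (\<lambda>x. y \<tau> x - y (t m) x) \<le> ennreal \<epsilon>"
      by blast
    then show ?thesis using a b by (intro exI[of _ \<delta>]) auto
  qed
  have good: "AE x in lborel. x \<in> \<Omega> \<longrightarrow> set_integrable lborel {t (m - 1)..t m} (\<lambda>\<tau>. y \<tau> x)"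
    using a ab b by (intro AE_set_integrable_Icc_of_L2L2sq[OF y_measurable \<Omega>_measurable y_fin]) auto
  have "m \<noteq> 0" using m by simp
  show ?thesis
    unfolding Pk_error_def mstep_def Pk_eq_interval_avg[OF \<open>m \<noteq> 0\<close>]
    by (rule L2sq_avg_minus_endpoint_le_gagliardo[OF ab s good near])
qed

lemma gk_weighted_sum_le_Hs_sq_fractional:
  assumes tm: "time_mesh T M t \<kappa>" and s: "1/2 < s" "s < 1"
    and pt_fin: "\<forall>\<tau>\<in>{0..T}. L2sq \<Omega> (y \<tau>) < \<infinity>"
    and cont: "\<forall>\<tau>0\<in>{0..T}. ((\<lambda>\<tau>. enn2real (L2sq \<Omega> (\<lambda>x. y \<tau> x - y \<tau>0 x))) \<longlongrightarrow> 0) (at \<tau>0 within {0..T})"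
    and H_fin: "Hs_sq s T \<Omega> y < \<infinity>"
  shows "gk_weighted_sum s t \<Omega> y M \<le> ennreal (2 * dyadic_const s * (1 + \<bar>\<kappa>\<bar>)) * Hs_sq s T \<Omega> y"
proof -
  have y_fin: "L2L2sq {0<..<T} \<Omega> y < \<infinity>"
    using H_fin s unfolding Hs_sq_def by simp
  have "gk_weighted_sum s t \<Omega> y M
      \<le> ennreal (2 * dyadic_const s * (1 + \<bar>\<kappa>\<bar>)) * (\<Sum>m\<in>{1..M}. gagliardo_sq s {t (m - 1)..t m} \<Omega> y)"
    using s by (intro gk_weighted_sum_le[OF tm] Pk_error_le_gagliardo[OF tm _ s(1) y_fin pt_fin cont])
      (auto simp: dyadic_const_def)
  also have "\<dots> \<le> ennreal (2 * dyadic_const s * (1 + \<bar>\<kappa>\<bar>)) * gagliardo_sq s {0<..<T} \<Omega> y"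
    by (intro mult_left_mono sum_gagliardo_sq_time_mesh_le[OF tm]) simp
  also have "\<dots> \<le> ennreal (2 * dyadic_const s * (1 + \<bar>\<kappa>\<bar>)) * Hs_sq s T \<Omega> y"
    unfolding Hs_sq_def using s by (intro mult_left_mono add_increasing2) auto
  finally show ?thesis .
qed

lemma gk_weighted_sum_le_weak_deriv:
  assumes tm: "time_mesh T M t \<kappa>" and wd: "weak_time_deriv 0 T \<Omega> y w"
    and y_fin: "L2L2sq {0<..<T} \<Omega> y < \<infinity>"
  shows "gk_weighted_sum 1 t \<Omega> y M \<le> ennreal (2 * (1 + \<bar>\<kappa>\<bar>)) * L2L2sq {0<..<T} \<Omega> w"
proof (cases "L2L2sq {0<..<T} \<Omega> w < \<infinity>")
  case True
  have [measurable]: "(\<lambda>(\<tau>, x). w \<tau> x) \<in> borel_measurable (lborel \<Otimes>\<^sub>M lborel)"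
    using wd unfolding weak_time_deriv_def by simp
  have "Pk_error t \<Omega> y m \<le> ennreal (1 * mstep t m powr (2 * 1 - 1)) * L2L2sq {t (m - 1)..t m} \<Omega> w"
    if m: "m \<in> {1..M}" for m
  proof -
    have "0 \<le> t (m - 1)" "t (m - 1) < t m" "t m \<le> T"
      using time_mesh_range[OF tm] time_mesh_less[OF tm m] m by auto
    then show ?thesis
      using m L2sq_avg_minus_endpoint_le_weak_deriv[OF wd _ _ _ y_fin True]
      unfolding Pk_error_def mstep_def by (simp add: Pk_eq_interval_avg)
  qed
  then have "gk_weighted_sum 1 t \<Omega> y M
      \<le> ennreal (2 * 1 * (1 + \<bar>\<kappa>\<bar>)) * (\<Sum>m\<in>{1..M}. L2L2sq {t (m - 1)..t m} \<Omega> w)"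
    by (intro gk_weighted_sum_le[OF tm]) auto
  also have "\<dots> \<le> ennreal (2 * 1 * (1 + \<bar>\<kappa>\<bar>)) * L2L2sq {0<..<T} \<Omega> w"
    by (intro mult_left_mono sum_L2L2sq_time_mesh_le[OF _ \<Omega>_measurable tm]) auto
  finally show ?thesis by simp
next
  case False
  then have "L2L2sq {0<..<T} \<Omega> w = \<infinity>" by (simp add: less_top[symmetric])
  moreover have "ennreal (2 * (1 + \<bar>\<kappa>\<bar>)) * \<infinity> = \<infinity>"
    by (simp add: ennreal_mult_eq_top_iff add_pos_nonneg del: ennreal_plus)
  ultimately show ?thesis by simp
qed

lemma gk_weighted_sum_le_Hs_sq_H1:
  assumes tm: "time_mesh T M t \<kappa>" and H_fin: "Hs_sq 1 T \<Omega> y < \<infinity>"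
  shows "gk_weighted_sum 1 t \<Omega> y M \<le> ennreal (2 * (1 + \<bar>\<kappa>\<bar>)) * Hs_sq 1 T \<Omega> y"
proof -
  have y_fin: "L2L2sq {0<..<T} \<Omega> y < \<infinity>"
    using H_fin unfolding Hs_sq_def by simp
  have "gk_weighted_sum 1 t \<Omega> y M
      \<le> ennreal (2 * (1 + \<bar>\<kappa>\<bar>)) * (INF w\<in>{w. weak_time_deriv 0 T \<Omega> y w}. L2L2sq {0<..<T} \<Omega> w)"
    by (intro le_mult_INF_ennreal gk_weighted_sum_le_weak_deriv[OF tm _ y_fin]) (auto simp: add_pos_nonneg)
  also have "\<dots> \<le> ennreal (2 * (1 + \<bar>\<kappa>\<bar>)) * Hs_sq 1 T \<Omega> y"
    unfolding Hs_sq_def by (intro mult_left_mono add_increasing) auto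
  finally show ?thesis .
qed


lemma gk_weighted_sum_le_Hs_sq:
  assumes tm: "time_mesh T M t \<kappa>" and s: "1/2 < s" "s \<le> 1"
    and pt_fin: "\<forall>\<tau>\<in>{0..T}. L2sq \<Omega> (y \<tau>) < \<infinity>"
    and cont: "\<forall>\<tau>0\<in>{0..T}. ((\<lambda>\<tau>. enn2real (L2sq \<Omega> (\<lambda>x. y \<tau> x - y \<tau>0 x))) \<longlongrightarrow> 0) (at \<tau>0 within {0..T})"
    and H_fin: "Hs_sq s T \<Omega> y < \<infinity>"
  shows "gk_weighted_sum s t \<Omega> y M \<le> ennreal (2 * (dyadic_const s + 1) * (1 + \<bar>\<kappa>\<bar>)) * Hs_sq s T \<Omega> y"
proof -
  have "0 \<le> dyadic_const s" by (simp add: dyadic_const_def)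
  show ?thesis
  proof (cases "s < 1")
    case True
    then show ?thesis
      using \<open>0 \<le> dyadic_const s\<close>
      by (intro order.trans[OF gk_weighted_sum_le_Hs_sq_fractional[OF tm s(1) True pt_fin cont H_fin]]
          mult_right_mono ennreal_leI) auto
  next
    case False
    then have "s = 1" using s by simp
    have "gk_weighted_sum 1 t \<Omega> y M \<le> ennreal (2 * (dyadic_const 1 + 1) * (1 + \<bar>\<kappa>\<bar>)) * Hs_sq 1 T \<Omega> y"
      using H_fin \<open>0 \<le> dyadic_const s\<close> unfolding \<open>s = 1\<close>
      by (intro order.trans[OF gk_weighted_sum_le_Hs_sq_H1[OF tm]] mult_right_mono ennreal_leI) auto
    then show ?thesis using \<open>s = 1\<close> by simp
  qed
qed

end

theorem lemma5p1:
  fixes \<Omega> :: "'a::euclidean_space set" and s T \<kappa> :: real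
  assumes "DIM('a) \<in> {2, 3}" and "bounded \<Omega>" and "open \<Omega>"
    and "1 / 2 < s" and "s \<le> 1" and "0 < T"
  shows "\<exists>C. \<forall>M t (y :: real \<Rightarrow> 'a \<Rightarrow> real).
           time_mesh T M t \<kappa> \<and>
           (\<lambda>(\<tau>, x). y \<tau> x) \<in> borel_measurable (lborel \<Otimes>\<^sub>M lborel) \<and>
           (\<forall>\<tau>\<in>{0..T}. L2sq \<Omega> (y \<tau>) < \<infinity>) \<and>
           (\<forall>\<tau>0\<in>{0..T}. ((\<lambda>\<tau>. enn2real (L2sq \<Omega> (\<lambda>x. y \<tau> x - y \<tau>0 x))) \<longlongrightarrow> 0) (at \<tau>0 within {0..T})) \<and>
           Hs_sq s T \<Omega> y < \<infinity>
           \<longrightarrow> (\<Sum>m = 1..M. ennreal (mstep t m powr (1 - (2 * s - 1))) * L2L2sq {t (m - 1)<..t m} \<Omega> (\<lambda>_. gk t y m))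
               \<le> ennreal C * Hs_sq s T \<Omega> y"
proof -
  have \<Omega>_measurable: "\<Omega> \<in> sets lborel" using \<open>open \<Omega>\<close> by (simp add: borel_open)
  show ?thesis
  proof (intro exI[of _ "2 * (dyadic_const s + 1) * (1 + \<bar>\<kappa>\<bar>)"] allI impI, elim conjE)
    fix M t and y :: "real \<Rightarrow> 'a \<Rightarrow> real"
    assume "time_mesh T M t \<kappa>" and "(\<lambda>(\<tau>, x). y \<tau> x) \<in> borel_measurable (lborel \<Otimes>\<^sub>M lborel)"
      and "\<forall>\<tau>\<in>{0..T}. L2sq \<Omega> (y \<tau>) < \<infinity>"
      and "\<forall>\<tau>0\<in>{0..T}. ((\<lambda>\<tau>. enn2real (L2sq \<Omega> (\<lambda>x. y \<tau> x - y \<tau>0 x))) \<longlongrightarrow> 0) (at \<tau>0 within {0..T})"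
      and "Hs_sq s T \<Omega> y < \<infinity>"
    from gk_weighted_sum_le_Hs_sq[OF this(2) \<Omega>_measurable this(1) assms(4,5) this(3-5)]
    show "(\<Sum>m = 1..M. ennreal (mstep t m powr (1 - (2 * s - 1))) * L2L2sq {t (m - 1)<..t m} \<Omega> (\<lambda>_. gk t y m))
        \<le> ennreal (2 * (dyadic_const s + 1) * (1 + \<bar>\<kappa>\<bar>)) * Hs_sq s T \<Omega> y"
      unfolding gk_weighted_sum_def .
  qed
qed

end
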